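(* Let $X$ be a random variable and $K$ a finite constant. Let $\{X_{kn}\}_{1\le k\le n}$ be a triangular array of random variables such that for each $n$, $X_{1n},\dots,X_{nn}$ are independent and $K$-weakly mean dominated by $X$. Let $S_n=X_{1n}+\dots+X_{nn}$. Fix $r\ge1$ and $0<p<2$. Suppose $E[|X|^{rp}]<\infty$, and if $p\ge1$ suppose also that $E[X_{1n}+\dots+X_{nn}]=0$ for all $n$. Then $\sum_{n=1}^\infty n^{r-2}P(|S_n|\ge\varepsilon n^{1/p})<\infty$ for all $\varepsilon>0$.
   Context: Random variables $X_1,\dots,X_n$ are $K$-weakly mean dominated by a random variable $X$ if for all $\lambda$, $\frac1n\sum_{k=1}^nP(|X_k|\ge\lambda)\le KP(|X|\ge\lambda)$. *)

theory Defs
  imports "HOL-Probability.Probability"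
begin

definition weakly_mean_dominated ::
  "'a measure \<Rightarrow> real \<Rightarrow> (nat \<Rightarrow> 'a \<Rightarrow> real) \<Rightarrow> nat \<Rightarrow> ('a \<Rightarrow> real) \<Rightarrow> bool" where
  "weakly_mean_dominated M K Y n X \<longleftrightarrow>
     (\<forall>t::real. (1 / real n) * (\<Sum>k=1..n. measure M {\<omega> \<in> space M. \<bar>Y k \<omega>\<bar> \<ge> t})
        \<le> K * measure M {\<omega> \<in> space M. \<bar>X \<omega>\<bar> \<ge> t})"

end

(* Truncate the n-th row at a level b and split S_n into the centred truncated sum, the sum
   of the truncated means and the contribution of the entries above b. Via the layer-cake
   formula, weak mean domination bounds every row sum sum_k E phi(|X_kn|) with
   phi(y) = integral of a nonnegative g over [0, y] by n K E phi(|X|).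

   For r = 1 truncate at n^(1/p): some entry exceeds n^(1/p) with probability summable
   against 1/n since E|X|^p < oo, and Chebyshev's inequality handles the centred truncated
   sum. For r > 1 truncate at n^gamma with gamma slightly below 1/p: with probability
   summable against n^(r-2), no entry exceeds delta n^(1/p) and fewer than a fixed number N
   of entries exceed n^gamma (a Chernoff bound for the count), and a Bernstein-type
   exponential bound controls the centred truncated sum. In both cases the truncated means
   add up to o(n^(1/p)): for p < 1 directly, for p >= 1 because the row sums are centred. *)

theory Submission
  imports Defs "HOL-Real_Asymp.Real_Asymp"
begin

lemma powr_le_1_plus_powr:
  fixes y :: real
  assumes "0 \<le> y" "0 < a" "a \<le> q"
  shows "y powr a \<le> 1 + y powr q"
proof (cases "y \<le> 1")
  case True
  then have "y powr a \<le> 1" using assms by (intro powr_le1) auto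
  then show ?thesis using powr_ge_zero[of y q] by linarith
next
  case False
  then have "y powr a \<le> y powr q" using assms by (intro powr_mono) auto
  then show ?thesis by simp
qed

lemma min_power2_le_powr:
  fixes y b q :: real
  assumes y: "0 \<le> y" and b: "1 \<le> b" and q: "0 < q"
  shows "(min y b)\<^sup>2 \<le> b powr (2 - min q 2) * (1 + y powr q)"
proof (cases "q \<ge> 2")
  case True
  have "(min y b)\<^sup>2 \<le> y\<^sup>2" using y b by (auto intro!: power_mono)
  also have "y\<^sup>2 = y powr 2" using y by (cases "y = 0") (auto simp: powr_realpow)
  also have "\<dots> \<le> 1 + y powr q" using powr_le_1_plus_powr[OF y _ True] by simp
  finally show ?thesis using True b by simp
next
  case False
  define m where "m = min y b"
  have m: "0 \<le> m" "m \<le> y" "m \<le> b" using y b by (auto simp: m_def)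
  have "(min y b)\<^sup>2 = m powr q * m powr (2 - q)"
  proof (cases "m = 0")
    case False
    then have "m powr q * m powr (2 - q) = m powr 2" using m by (simp add: powr_add[symmetric])
    also have "\<dots> = m\<^sup>2" using m False by (simp add: powr_realpow)
    finally show ?thesis by (simp add: m_def)
  qed (simp add: m_def)
  also have "\<dots> \<le> y powr q * b powr (2 - q)"
    using m q False by (intro mult_mono powr_mono2) auto
  also have "\<dots> \<le> b powr (2 - q) * (1 + y powr q)" by (simp add: algebra_simps)
  finally show ?thesis using False by simp
qed

lemma powr_mult_min_le_powr:
  fixes p y :: real
  assumes p: "0 < p" "p < 1" and y: "0 \<le> y"
  shows "real n powr (1 - 1/p) * min y (real n powr (1/p)) \<le> y powr p"
proof (cases "n = 0")
  case True then show ?thesis by simp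
next
  case False
  define N where "N = real n powr (1/p)"
  have N: "N > 0" using False by (simp add: N_def)
  have e: "real n powr (1 - 1/p) = N powr (p - 1)"
    using p by (simp add: N_def powr_powr field_simps)
  show ?thesis
  proof (cases "N \<le> y")
    case True
    have "real n powr (1 - 1/p) * min y (real n powr (1/p)) = N powr (p - 1) * N"
      using True by (simp add: e N_def[symmetric])
    also have "\<dots> = N powr p" using N by (simp add: powr_diff)
    also have "\<dots> \<le> y powr p" using N True p by (intro powr_mono2) auto
    finally show ?thesis .
  next
    case False
    show ?thesis
    proof (cases "y = 0")
      case True then show ?thesis by simp
    next
      case y0: False
      have "real n powr (1 - 1/p) * min y (real n powr (1/p)) = N powr (p - 1) * y"
        using False by (simp add: e N_def[symmetric])
      also have "\<dots> \<le> y powr (p - 1) * y"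
        using False y y0 p by (intro mult_right_mono powr_mono2') auto
      also have "\<dots> = y powr p" using y y0 by (simp add: powr_diff)
      finally show ?thesis .
    qed
  qed
qed

lemma min_power2_divide:
  fixes y N :: real
  assumes "0 \<le> y" "0 < N"
  shows "(min y N)\<^sup>2 / N\<^sup>2 = min (y\<^sup>2 / N\<^sup>2) 1"
proof (cases "y \<le> N")
  case True
  then have "y\<^sup>2 \<le> N\<^sup>2" using assms by (intro power_mono) auto
  then show ?thesis using True assms by (auto simp: min_def field_simps)
next
  case False
  then have "N\<^sup>2 \<le> y\<^sup>2" using assms by (intro power_mono) auto
  then show ?thesis using False assms by (auto simp: min_def field_simps)
qed

lemma mult_powr_inverse_le_iff:
  fixes c y p :: real
  assumes c: "c > 0" and y: "y \<ge> 0" and p: "p > 0"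
  shows "(c * real m powr (1/p) \<le> y) \<longleftrightarrow> (real m \<le> (y / c) powr p)"
proof
  assume h: "c * real m powr (1/p) \<le> y"
  then have "real m powr (1/p) \<le> y / c" using c by (simp add: field_simps)
  then have "(real m powr (1/p)) powr p \<le> (y / c) powr p" using p by (intro powr_mono2) auto
  then show "real m \<le> (y / c) powr p" using p by (simp add: powr_powr)
next
  assume h: "real m \<le> (y / c) powr p"
  then have "real m powr (1/p) \<le> ((y / c) powr p) powr (1/p)" using p by (intro powr_mono2) auto
  also have "\<dots> = y / c" using p c y by (simp add: powr_powr)
  finally show "c * real m powr (1/p) \<le> y" using c by (simp add: field_simps)
qed

lemma exp_le_quadratic: "\<bar>u::real\<bar> \<le> 1 \<Longrightarrow> exp u \<le> 1 + u + u\<^sup>2"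
proof (cases "u \<ge> 0")
  case True
  assume "\<bar>u\<bar> \<le> 1"
  then show ?thesis using exp_bound[of u] True by simp
next
  case False
  assume "\<bar>u\<bar> \<le> 1"
  define v where "v = - u"
  have v: "0 < v" "v \<le> 1" using False \<open>\<bar>u\<bar> \<le> 1\<close> by (auto simp: v_def)
  have "1 + v \<le> exp v" by (rule exp_ge_add_one_self)
  then have "exp (-v) \<le> 1 / (1 + v)"
    using v by (simp add: exp_minus field_simps)
  also have "1 / (1 + v) \<le> 1 - v + v\<^sup>2"
  proof -
    have "1 \<le> (1 + v) * (1 - v + v\<^sup>2)" using v by (simp add: algebra_simps power2_eq_square power3_eq_cube)
    then show ?thesis using v by (simp add: field_simps)
  qed
  finally show ?thesis by (simp add: v_def)
qed

lemma Bernstein_exponent_eq: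
  fixes n :: nat and p \<gamma> q \<epsilon> K E :: real
  assumes n: "n \<ge> 1"
  shows "- (1 / (2 * real n powr \<gamma>)) * (\<epsilon> / 2 * real n powr (1/p))
      + (1 / (2 * real n powr \<gamma>))\<^sup>2 * (real n * K * ((real n powr \<gamma>) powr (2 - q) * (1 + E)))
    = - (\<epsilon> / 4) * real n powr (1/p - \<gamma>) + K * (1 + E) / 4 * real n powr (1 - \<gamma> * q)"
proof -
  have pos: "real n powr \<gamma> > 0" using n by simp
  have "real n * (real n powr \<gamma>) powr (2 - q) / (real n powr \<gamma>)\<^sup>2
      = real n powr 1 * real n powr (\<gamma> * (2 - q)) / real n powr (2 * \<gamma>)"
    using n by (simp add: powr_powr powr_power mult.commute)
  also have "\<dots> = real n powr (1 + \<gamma> * (2 - q) - 2 * \<gamma>)"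
    by (simp only: powr_add[symmetric] powr_diff[symmetric])
  also have "1 + \<gamma> * (2 - q) - 2 * \<gamma> = 1 - \<gamma> * q" by (simp add: algebra_simps)
  finally have moment: "real n * (real n powr \<gamma>) powr (2 - q) / (real n powr \<gamma>)\<^sup>2 = real n powr (1 - \<gamma> * q)" .
  have shift: "real n powr (1/p) / real n powr \<gamma> = real n powr (1/p - \<gamma>)"
    by (simp add: powr_diff)
  have "- (1 / (2 * real n powr \<gamma>)) * (\<epsilon> / 2 * real n powr (1/p))
      + (1 / (2 * real n powr \<gamma>))\<^sup>2 * (real n * K * ((real n powr \<gamma>) powr (2 - q) * (1 + E)))
    = - (\<epsilon> / 4) * (real n powr (1/p) / real n powr \<gamma>)
      + K * (1 + E) / 4 * (real n * (real n powr \<gamma>) powr (2 - q) / (real n powr \<gamma>)\<^sup>2)"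
    using pos by (simp add: field_simps power2_eq_square)
  then show ?thesis by (simp only: moment shift)
qed

lemma eventually_powr_mult_exp_le:
  fixes \<theta> \<kappa> c C R :: real
  assumes "\<theta> > 0" "\<kappa> < \<theta>" "c > 0"
  shows "eventually (\<lambda>n. real n powr R * exp (- c * real n powr \<theta> + C * real n powr \<kappa>) \<le> real n powr (-2)) sequentially"
  using assms by real_asymp

(* The constraints on gamma: the first two make the Bernstein bound for the centred sums
   truncated at n^gamma decay like exp(-c n^(1/p - gamma)); gamma r p > 1 makes
   n P(|X| >= n^gamma) bounded, so that N entries above n^gamma are rare; the last one
   makes the truncated means negligible when p >= 1. *)
lemma exists_truncation_exponent:
  fixes r p :: real
  assumes r: "r > 1" and p0: "0 < p" and p2: "p < 2"
  shows "\<exists>\<gamma>. 0 < \<gamma> \<and> \<gamma> < 1/p \<and> 1 < \<gamma> * (r * p) \<and> 1 - \<gamma> * min (r * p) 2 < 1/p - \<gamma> \<and> 1 - 1/p \<le> \<gamma> * (r * p - 1)"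
proof -
  define q' where "q' = min (r * p) 2"
  have rp: "r * p > p" using r p0 by simp
  have q'p: "q' / p > 1" using rp p2 p0 by (simp add: q'_def field_simps)
  have e1: "eventually (\<lambda>\<theta>::real. 0 < \<theta>) (at_right 0)" by (rule eventually_at_right_less)
  have e2: "eventually (\<lambda>\<theta>. 0 < 1/p - \<theta>) (at_right 0)"
  proof -
    have "((\<lambda>\<theta>::real. 1/p - \<theta>) \<longlongrightarrow> 1/p - 0) (at_right 0)" by (intro tendsto_intros)
    moreover have "0 < 1/p - 0" using p0 by simp
    ultimately show ?thesis by (rule order_tendstoD(1))
  qed
  have e3: "eventually (\<lambda>\<theta>. 1 < (1/p - \<theta>) * (r * p)) (at_right 0)"
  proof -
    have "((\<lambda>\<theta>::real. (1/p - \<theta>) * (r * p)) \<longlongrightarrow> (1/p - 0) * (r * p)) (at_right 0)" by (intro tendsto_intros)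
    then show ?thesis using p0 r by (intro order_tendstoD(1)) auto
  qed
  have e4: "eventually (\<lambda>\<theta>. 0 < \<theta> - 1 + (1/p - \<theta>) * q') (at_right 0)"
  proof -
    have "((\<lambda>\<theta>::real. \<theta> - 1 + (1/p - \<theta>) * q') \<longlongrightarrow> 0 - 1 + (1/p - 0) * q') (at_right 0)" by (intro tendsto_intros)
    moreover have "0 < 0 - 1 + (1/p - 0) * q'" using q'p by simp
    ultimately show ?thesis by (intro order_tendstoD(1))
  qed
  have e5: "eventually (\<lambda>\<theta>. 1 - 1/p < (1/p - \<theta>) * (r * p - 1)) (at_right 0)"
  proof -
    have "((\<lambda>\<theta>::real. (1/p - \<theta>) * (r * p - 1)) \<longlongrightarrow> (1/p - 0) * (r * p - 1)) (at_right 0)" by (intro tendsto_intros)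
    moreover have "1 - 1/p < (1/p - 0) * (r * p - 1)"
    proof -
      have "(1/p - 0) * (r * p - 1) = r - 1/p" using p0 by (simp add: field_simps)
      then show ?thesis using r by simp
    qed
    ultimately show ?thesis by (intro order_tendstoD(1))
  qed
  have "eventually (\<lambda>\<theta>. 0 < \<theta> \<and> 0 < 1/p - \<theta> \<and> 1 < (1/p - \<theta>) * (r * p) \<and> 0 < \<theta> - 1 + (1/p - \<theta>) * q' \<and> 1 - 1/p < (1/p - \<theta>) * (r * p - 1)) (at_right 0)"
    using e1 e2 e3 e4 e5 by eventually_elim auto
  then obtain \<theta> :: real where th: "0 < \<theta>" "0 < 1/p - \<theta>" "1 < (1/p - \<theta>) * (r * p)" "0 < \<theta> - 1 + (1/p - \<theta>) * q'" "1 - 1/p < (1/p - \<theta>) * (r * p - 1)"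
    using eventually_happens[of _ "at_right (0::real)"] by force
  show ?thesis
    by (rule exI[of _ "1/p - \<theta>"]) (use th in \<open>auto simp: q'_def\<close>)
qed

lemma powr_neg_le_diff_powr:
  fixes s t :: real
  assumes s: "s > 1" and t: "t \<ge> 1"
  shows "(t + 1) powr (- s) \<le> (t powr (1 - s) - (t + 1) powr (1 - s)) / (s - 1)"
proof -
  have "\<forall>x. t \<le> x \<and> x \<le> t + 1 \<longrightarrow> ((\<lambda>y. y powr (1 - s)) has_real_derivative (1 - s) * x powr (1 - s - 1)) (at x)"
    using t by (auto intro!: derivative_eq_intros)
  then obtain z where z: "t < z" "z < t + 1" and eq: "(t + 1) powr (1 - s) - t powr (1 - s) = ((t + 1) - t) * ((1 - s) * z powr (1 - s - 1))"
    using MVT2[of t "t + 1" "\<lambda>y. y powr (1 - s)" "\<lambda>x. (1 - s) * x powr (1 - s - 1)"] by auto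
  have "(t + 1) powr (- s) \<le> z powr (- s)"
    using z t s by (intro powr_mono2') auto
  then have "(s - 1) * (t + 1) powr (- s) \<le> (s - 1) * z powr (- s)"
    using s by (intro mult_left_mono) auto
  also have "\<dots> = t powr (1 - s) - (t + 1) powr (1 - s)"
    using eq by (simp add: algebra_simps)
  finally show ?thesis using s by (simp add: field_simps)
qed

lemma sum_powr_neg_le:
  fixes s :: real
  assumes s: "s > 1" and M: "M \<ge> 1"
  shows "(\<Sum>m\<in>{M..N}. real m powr (- s)) \<le> real M powr (- s) + real M powr (1 - s) / (s - 1)"
proof (cases "N \<ge> M")
  case True
  have "(\<Sum>m\<in>{M..N}. real m powr (- s)) \<le> real M powr (- s) + (real M powr (1 - s) - real N powr (1 - s)) / (s - 1)"
    using True
  proof (induction N)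
    case 0 then show ?case using M by simp
  next
    case (Suc N)
    show ?case
    proof (cases "Suc N = M")
      case True then show ?thesis by simp
    next
      case False
      then have NM: "N \<ge> M" using Suc.prems by simp
      have "(\<Sum>m\<in>{M..Suc N}. real m powr (- s)) = (\<Sum>m\<in>{M..N}. real m powr (- s)) + real (Suc N) powr (- s)"
        using NM by (simp add: sum.cl_ivl_Suc)
      also have "\<dots> \<le> real M powr (- s) + (real M powr (1 - s) - real N powr (1 - s)) / (s - 1)
          + (real N powr (1 - s) - real (Suc N) powr (1 - s)) / (s - 1)"
      proof (rule add_mono)
        show "(\<Sum>m\<in>{M..N}. real m powr (- s)) \<le> real M powr (- s) + (real M powr (1 - s) - real N powr (1 - s)) / (s - 1)"
          using Suc.IH NM by blast
        have "real N \<ge> 1" using NM M by simp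
        from powr_neg_le_diff_powr[OF s this]
        show "real (Suc N) powr (- s) \<le> (real N powr (1 - s) - real (Suc N) powr (1 - s)) / (s - 1)"
          by (simp add: add.commute)
      qed
      also have "\<dots> = real M powr (- s) + (real M powr (1 - s) - real (Suc N) powr (1 - s)) / (s - 1)"
        by (simp add: diff_divide_distrib)
      finally show ?thesis .
    qed
  qed
  also have "\<dots> \<le> real M powr (- s) + real M powr (1 - s) / (s - 1)"
    using s by (intro add_left_mono divide_right_mono) auto
  finally show ?thesis .
qed (use s in simp)

lemma sum_powr_indicator_le:
  fixes W r :: real
  assumes W: "W \<ge> 0" and r: "r \<ge> 1"
  shows "(\<Sum>m<N. real m powr (r - 1) * (if real m \<le> W then 1 else 0)) \<le> W powr r"
proof -
  define F where "F = nat \<lfloor>W\<rfloor>"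
  have FW: "real F \<le> W" using W by (simp add: F_def)
  have "(\<Sum>m<N. real m powr (r - 1) * (if real m \<le> W then 1 else 0)) \<le> (\<Sum>m<N. if m \<in> {1..F} then W powr (r - 1) else 0)"
  proof (rule sum_mono)
    fix m assume "m \<in> {..<N}"
    show "real m powr (r - 1) * (if real m \<le> W then 1 else 0) \<le> (if m \<in> {1..F} then W powr (r - 1) else 0)"
    proof (cases "m = 0")
      case True then show ?thesis by simp
    next
      case False
      show ?thesis
      proof (cases "real m \<le> W")
        case True
        then have "m \<le> F" unfolding F_def by (simp add: le_nat_floor)
        moreover have "real m powr (r - 1) \<le> W powr (r - 1)" using True r by (intro powr_mono2) auto
        ultimately show ?thesis using False True by simp
      qed simp
    qed
  qed
  also have "\<dots> = (\<Sum>m\<in>{..<N} \<inter> {1..F}. W powr (r - 1))"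
    by (rule sum.inter_restrict[symmetric]) simp
  also have "\<dots> = real (card ({..<N} \<inter> {1..F})) * W powr (r - 1)" by simp
  also have "\<dots> \<le> real F * W powr (r - 1)"
  proof (rule mult_right_mono)
    have "card ({..<N} \<inter> {1..F}) \<le> card {1..F}" by (rule card_mono) auto
    then show "real (card ({..<N} \<inter> {1..F})) \<le> real F" by simp
  qed simp
  also have "\<dots> \<le> W * W powr (r - 1)" by (rule mult_right_mono[OF FW]) simp
  also have "\<dots> = W powr r"
  proof (cases "W = 0")
    case True then show ?thesis by simp
  next
    case False
    have "W powr r = W powr (1 + (r - 1))" by simp
    also have "\<dots> = W powr 1 * W powr (r - 1)" by (rule powr_add)
    also have "W powr 1 = W" using W False by simp
    finally show ?thesis by simp
  qed
  finally show ?thesis .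
qed

lemma powr_mult_sum_powr_neg_above_floor_le:
  fixes a s :: real
  assumes a: "a \<ge> 0" and s: "s > 1"
  shows "a powr s * (\<Sum>m\<in>{nat \<lfloor>a\<rfloor> + 1..N}. real m powr (- s)) \<le> 1 + a / (s - 1)"
proof -
  define F where "F = real (nat \<lfloor>a\<rfloor> + 1)"
  have "F = real_of_int \<lfloor>a\<rfloor> + 1" using a by (simp add: F_def)
  then have "a < F" using real_of_int_floor_add_one_gt[of a] by linarith
  moreover have "F \<ge> 1" by (simp add: F_def)
  ultimately have F: "a < F" "F \<ge> 1" by auto
  have first: "a powr s * F powr (- s) \<le> 1"
  proof -
    have "a powr s * F powr (- s) = (a / F) powr s"
      using a F by (simp add: powr_divide powr_minus_divide)
    also have "\<dots> \<le> 1" using a F s by (intro powr_le1) auto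
    finally show ?thesis .
  qed
  have rest: "a powr s * F powr (1 - s) \<le> a"
  proof (cases "a = 0")
    case False
    then have "a powr s * F powr (1 - s) \<le> a powr s * a powr (1 - s)"
      using a F s by (intro mult_left_mono powr_mono2') auto
    also have "\<dots> = a" using a False by (simp add: powr_add[symmetric])
    finally show ?thesis .
  qed simp
  have "a powr s * (\<Sum>m\<in>{nat \<lfloor>a\<rfloor> + 1..N}. real m powr (- s)) \<le> a powr s * (F powr (- s) + F powr (1 - s) / (s - 1))"
    unfolding F_def by (rule mult_left_mono[OF sum_powr_neg_le[OF s]]) auto
  also have "\<dots> = a powr s * F powr (- s) + (a powr s * F powr (1 - s)) / (s - 1)"
    by (simp add: algebra_simps)
  also have "\<dots> \<le> 1 + a / (s - 1)"
    using first rest s by (intro add_mono divide_right_mono) auto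
  finally show ?thesis .
qed

lemma sum_min_powr_le:
  fixes a s :: real
  assumes a: "a \<ge> 0" and s: "s > 1"
  shows "(\<Sum>m<N. min ((a / real m) powr s) 1) \<le> 2 + a + a / (s - 1)"
proof -
  define F where "F = nat \<lfloor>a\<rfloor>"
  have "(\<Sum>m<N. min ((a / real m) powr s) 1) \<le> (\<Sum>m<N. if m \<le> F then 1 else a powr s * real m powr (- s))"
  proof (rule sum_mono)
    fix m assume "m \<in> {..<N}"
    show "min ((a / real m) powr s) 1 \<le> (if m \<le> F then 1 else a powr s * real m powr (- s))"
    proof (cases "m \<le> F")
      case False
      then have "(a / real m) powr s = a powr s * real m powr (- s)"
        using a by (simp add: powr_divide powr_minus_divide)
      then show ?thesis using False by simp
    qed simp
  qed
  also have "\<dots> = (\<Sum>m\<in>{..<N} \<inter> {m. m \<le> F}. 1) + (\<Sum>m\<in>{..<N} \<inter> - {m. m \<le> F}. a powr s * real m powr (- s))"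
    by (rule sum.If_cases) simp
  also have "\<dots> \<le> (a + 1) + (1 + a / (s - 1))"
  proof (rule add_mono)
    have "card ({..<N} \<inter> {m. m \<le> F}) \<le> card {..F}" by (rule card_mono) auto
    then have "(\<Sum>m\<in>{..<N} \<inter> {m. m \<le> F}. 1) \<le> real F + 1" by simp
    moreover have "real F \<le> a" using a by (simp add: F_def)
    ultimately show "(\<Sum>m\<in>{..<N} \<inter> {m. m \<le> F}. 1) \<le> a + 1" by linarith
    have "(\<Sum>m\<in>{..<N} \<inter> - {m. m \<le> F}. a powr s * real m powr (- s)) \<le> (\<Sum>m\<in>{F+1..N}. a powr s * real m powr (- s))"
      by (rule sum_mono2) auto
    also have "\<dots> = a powr s * (\<Sum>m\<in>{F+1..N}. real m powr (- s))" by (simp add: sum_distrib_left)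
    also have "\<dots> \<le> 1 + a / (s - 1)"
      unfolding F_def by (rule powr_mult_sum_powr_neg_above_floor_le[OF a s])
    finally show "(\<Sum>m\<in>{..<N} \<inter> - {m. m \<le> F}. a powr s * real m powr (- s)) \<le> 1 + a / (s - 1)" .
  qed
  finally show ?thesis by simp
qed

section \<open>Weak mean domination and the layer-cake formula\<close>

lemma (in prob_space) weakly_mean_dominated_K_ge_1:
  assumes wmd: "weakly_mean_dominated M K Y n X" and n: "n \<ge> 1"
  shows "K \<ge> 1"
proof -
  have "(1 / real n) * (\<Sum>k=1..n. prob {\<omega> \<in> space M. \<bar>Y k \<omega>\<bar> \<ge> 0}) \<le> K * prob {\<omega> \<in> space M. \<bar>X \<omega>\<bar> \<ge> 0}"
    using wmd unfolding weakly_mean_dominated_def by blast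
  moreover have "{\<omega> \<in> space M. \<bar>X \<omega>\<bar> \<ge> 0} = space M" by auto
  moreover have "\<And>k. {\<omega> \<in> space M. \<bar>Y k \<omega>\<bar> \<ge> 0} = space M" by auto
  ultimately show ?thesis using n by (simp add: prob_space)
qed

lemma (in prob_space) weakly_mean_dominated_sum_prob:
  assumes wmd: "weakly_mean_dominated M K Y n X" and n: "n \<ge> 1"
  shows "(\<Sum>k=1..n. prob {\<omega> \<in> space M. t \<le> \<bar>Y k \<omega>\<bar>}) \<le> real n * K * prob {\<omega> \<in> space M. t \<le> \<bar>X \<omega>\<bar>}"
proof -
  have "(1 / real n) * (\<Sum>k=1..n. prob {\<omega> \<in> space M. \<bar>Y k \<omega>\<bar> \<ge> t}) \<le> K * prob {\<omega> \<in> space M. \<bar>X \<omega>\<bar> \<ge> t}"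
    using wmd unfolding weakly_mean_dominated_def by blast
  then show ?thesis using n by (simp add: field_simps)
qed

lemma (in prob_space) borel_measurable_tail_prob:
  fixes Z :: "'a \<Rightarrow> real"
  assumes [measurable]: "Z \<in> borel_measurable M"
  shows "(\<lambda>t::real. ennreal (prob {\<omega> \<in> space M. t \<le> \<bar>Z \<omega>\<bar>})) \<in> borel_measurable borel"
proof -
  have "mono (\<lambda>t. - prob {\<omega> \<in> space M. t \<le> \<bar>Z \<omega>\<bar>})"
    by (auto simp: mono_def intro!: finite_measure_mono)
  then have "(\<lambda>t. - prob {\<omega> \<in> space M. t \<le> \<bar>Z \<omega>\<bar>}) \<in> borel_measurable borel"
    by (rule borel_measurable_mono)
  then have "(\<lambda>t. - (- prob {\<omega> \<in> space M. t \<le> \<bar>Z \<omega>\<bar>})) \<in> borel_measurable borel"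
    by measurable
  then show ?thesis by simp
qed

lemma (in prob_space) nn_integral_layer_cake:
  fixes Y :: "'a \<Rightarrow> real" and g :: "real \<Rightarrow> real"
  assumes [measurable]: "Y \<in> borel_measurable M" "g \<in> borel_measurable borel"
  shows "(\<integral>\<^sup>+\<omega>. (\<integral>\<^sup>+t. ennreal (g t) * indicator {0..\<bar>Y \<omega>\<bar>} t \<partial>lborel) \<partial>M)
     = (\<integral>\<^sup>+t. ennreal (g t) * indicator {0..} t * ennreal (prob {\<omega>\<in>space M. t \<le> \<bar>Y \<omega>\<bar>}) \<partial>lborel)"
proof -
  interpret pair_sigma_finite M lborel
    by (simp add: lborel.sigma_finite_measure_axioms pair_sigma_finite.intro sigma_finite_measure_axioms)
  have "case_prod (\<lambda>\<omega> t. ennreal (g t) * indicator {0..\<bar>Y \<omega>\<bar>} t)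
      = (\<lambda>x. ennreal (g (snd x)) * (if 0 \<le> snd x \<and> snd x \<le> \<bar>Y (fst x)\<bar> then 1 else 0))"
    by (auto simp: fun_eq_iff indicator_def)
  also have "\<dots> \<in> borel_measurable (M \<Otimes>\<^sub>M lborel)" by measurable
  finally have "case_prod (\<lambda>\<omega> t. ennreal (g t) * indicator {0..\<bar>Y \<omega>\<bar>} t) \<in> borel_measurable (M \<Otimes>\<^sub>M lborel)" .
  from Fubini'[OF this]
  have "(\<integral>\<^sup>+\<omega>. (\<integral>\<^sup>+t. ennreal (g t) * indicator {0..\<bar>Y \<omega>\<bar>} t \<partial>lborel) \<partial>M)
      = (\<integral>\<^sup>+t. (\<integral>\<^sup>+\<omega>. ennreal (g t) * indicator {0..\<bar>Y \<omega>\<bar>} t \<partial>M) \<partial>lborel)"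
    by simp
  also have "\<dots> = (\<integral>\<^sup>+t. ennreal (g t) * indicator {0..} t * emeasure M {\<omega>\<in>space M. t \<le> \<bar>Y \<omega>\<bar>} \<partial>lborel)"
  proof (rule nn_integral_cong)
    fix t :: real
    have "(\<integral>\<^sup>+\<omega>. ennreal (g t) * indicator {0..\<bar>Y \<omega>\<bar>} t \<partial>M)
        = (\<integral>\<^sup>+\<omega>. (ennreal (g t) * indicator {0..} t) * indicator {\<omega>\<in>space M. t \<le> \<bar>Y \<omega>\<bar>} \<omega> \<partial>M)"
      by (rule nn_integral_cong) (auto simp: indicator_def)
    also have "\<dots> = ennreal (g t) * indicator {0..} t * emeasure M {\<omega>\<in>space M. t \<le> \<bar>Y \<omega>\<bar>}"
      by (rule nn_integral_cmult_indicator) measurable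
    finally show "(\<integral>\<^sup>+\<omega>. ennreal (g t) * indicator {0..\<bar>Y \<omega>\<bar>} t \<partial>M) = \<dots>" .
  qed
  finally show ?thesis by (simp add: emeasure_eq_measure)
qed

lemma (in prob_space) weakly_mean_dominated_nn_integral:
  assumes wmd: "weakly_mean_dominated M K Y n X" and n: "n \<ge> 1"
    and [measurable]: "\<And>k. k \<in> {1..n} \<Longrightarrow> Y k \<in> borel_measurable M"
    and [measurable]: "X \<in> borel_measurable M" "g \<in> borel_measurable borel"
  shows "(\<Sum>k=1..n. \<integral>\<^sup>+\<omega>. (\<integral>\<^sup>+t. ennreal (g t) * indicator {0..\<bar>Y k \<omega>\<bar>} t \<partial>lborel) \<partial>M)
     \<le> ennreal (real n * K) * (\<integral>\<^sup>+\<omega>. (\<integral>\<^sup>+t. ennreal (g t) * indicator {0..\<bar>X \<omega>\<bar>} t \<partial>lborel) \<partial>M)"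
proof -
  have K: "K \<ge> 1" using weakly_mean_dominated_K_ge_1[OF wmd n] .
  define T where "T Z t = ennreal (g t) * indicator {0..} t * ennreal (prob {\<omega>\<in>space M. t \<le> \<bar>Z \<omega>\<bar>})" for Z t
  have T_measurable: "T Z \<in> borel_measurable borel" if "Z \<in> borel_measurable M" for Z
    unfolding T_def using that by (auto intro!: borel_measurable_times_ennreal borel_measurable_tail_prob)
  have "(\<Sum>k=1..n. \<integral>\<^sup>+\<omega>. (\<integral>\<^sup>+t. ennreal (g t) * indicator {0..\<bar>Y k \<omega>\<bar>} t \<partial>lborel) \<partial>M)
      = (\<Sum>k=1..n. \<integral>\<^sup>+t. T (Y k) t \<partial>lborel)"
    unfolding T_def by (rule sum.cong) (auto intro: nn_integral_layer_cake)
  also have "\<dots> = (\<integral>\<^sup>+t. (\<Sum>k=1..n. T (Y k) t) \<partial>lborel)"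
    by (rule nn_integral_sum[symmetric]) (auto intro!: T_measurable)
  also have "\<dots> \<le> (\<integral>\<^sup>+t. ennreal (real n * K) * T X t \<partial>lborel)"
  proof (rule nn_integral_mono)
    fix t
    have "(\<Sum>k=1..n. T (Y k) t)
        = ennreal (g t) * indicator {0..} t * ennreal (\<Sum>k=1..n. prob {\<omega>\<in>space M. t \<le> \<bar>Y k \<omega>\<bar>})"
      by (simp add: T_def flip: sum_distrib_left)
    also have "\<dots> \<le> ennreal (g t) * indicator {0..} t * ennreal (real n * K * prob {\<omega> \<in> space M. t \<le> \<bar>X \<omega>\<bar>})"
      by (intro mult_left_mono ennreal_leI weakly_mean_dominated_sum_prob[OF wmd n]) auto
    also have "\<dots> = ennreal (real n * K) * T X t"
      using K by (simp add: T_def ennreal_mult mult_ac)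
    finally show "(\<Sum>k=1..n. T (Y k) t) \<le> \<dots>" .
  qed
  also have "\<dots> = ennreal (real n * K) * (\<integral>\<^sup>+t. T X t \<partial>lborel)"
    by (rule nn_integral_cmult) (auto intro!: T_measurable)
  also have "\<dots> = ennreal (real n * K) * (\<integral>\<^sup>+\<omega>. (\<integral>\<^sup>+t. ennreal (g t) * indicator {0..\<bar>X \<omega>\<bar>} t \<partial>lborel) \<partial>M)"
    unfolding T_def by (subst nn_integral_layer_cake) auto
  finally show ?thesis .
qed

lemma (in prob_space) weakly_mean_dominated_integral:
  fixes \<phi> g :: "real \<Rightarrow> real"
  assumes wmd: "weakly_mean_dominated M K Y n X" and n: "n \<ge> 1"
    and Y_measurable[measurable]: "\<And>k. k \<in> {1..n} \<Longrightarrow> Y k \<in> borel_measurable M"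
    and [measurable]: "X \<in> borel_measurable M" "g \<in> borel_measurable borel" "\<phi> \<in> borel_measurable borel"
    and \<phi>_nonneg: "\<And>y. 0 \<le> y \<Longrightarrow> 0 \<le> \<phi> y"
    and \<phi>_eq: "\<And>y. 0 \<le> y \<Longrightarrow> (\<integral>\<^sup>+t. ennreal (g t) * indicator {0..y} t \<partial>lborel) = ennreal (\<phi> y)"
    and int_X: "integrable M (\<lambda>\<omega>. \<phi> \<bar>X \<omega>\<bar>)"
  shows "\<forall>k\<in>{1..n}. integrable M (\<lambda>\<omega>. \<phi> \<bar>Y k \<omega>\<bar>)"
    and "(\<Sum>k=1..n. \<integral>\<omega>. \<phi> \<bar>Y k \<omega>\<bar> \<partial>M) \<le> real n * K * (\<integral>\<omega>. \<phi> \<bar>X \<omega>\<bar> \<partial>M)"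
proof -
  have K: "K \<ge> 1" using weakly_mean_dominated_K_ge_1[OF wmd n] .
  have dom: "(\<Sum>k=1..n. \<integral>\<^sup>+\<omega>. ennreal (\<phi> \<bar>Y k \<omega>\<bar>) \<partial>M) \<le> ennreal (real n * K) * (\<integral>\<^sup>+\<omega>. ennreal (\<phi> \<bar>X \<omega>\<bar>) \<partial>M)"
    using weakly_mean_dominated_nn_integral[OF wmd n Y_measurable, of g] by (simp add: \<phi>_eq)
  have nn_X: "(\<integral>\<^sup>+\<omega>. ennreal (\<phi> \<bar>X \<omega>\<bar>) \<partial>M) = ennreal (\<integral>\<omega>. \<phi> \<bar>X \<omega>\<bar> \<partial>M)"
    by (rule nn_integral_eq_integral[OF int_X]) (auto simp: \<phi>_nonneg)
  have finite: "(\<Sum>k=1..n. \<integral>\<^sup>+\<omega>. ennreal (\<phi> \<bar>Y k \<omega>\<bar>) \<partial>M) < \<infinity>"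
    using dom nn_X by (metis ennreal_less_top ennreal_mult' ennreal_mult_less_top order.strict_trans1 infinity_ennreal_def)
  have int_Y: "integrable M (\<lambda>\<omega>. \<phi> \<bar>Y k \<omega>\<bar>)" if k: "k \<in> {1..n}" for k
  proof (rule integrableI_nonneg)
    show "(\<lambda>\<omega>. \<phi> \<bar>Y k \<omega>\<bar>) \<in> borel_measurable M" using k by measurable
    show "AE x in M. 0 \<le> \<phi> \<bar>Y k x\<bar>" by (auto simp: \<phi>_nonneg)
    have "(\<integral>\<^sup>+\<omega>. ennreal (\<phi> \<bar>Y k \<omega>\<bar>) \<partial>M) \<le> (\<Sum>k=1..n. \<integral>\<^sup>+\<omega>. ennreal (\<phi> \<bar>Y k \<omega>\<bar>) \<partial>M)"
      by (rule member_le_sum) (use k in auto)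
    then show "(\<integral>\<^sup>+\<omega>. ennreal (\<phi> \<bar>Y k \<omega>\<bar>) \<partial>M) < \<infinity>" using finite by (rule order.strict_trans1)
  qed
  then show "\<forall>k\<in>{1..n}. integrable M (\<lambda>\<omega>. \<phi> \<bar>Y k \<omega>\<bar>)" by blast
  have "ennreal (\<Sum>k=1..n. \<integral>\<omega>. \<phi> \<bar>Y k \<omega>\<bar> \<partial>M) = (\<Sum>k=1..n. ennreal (\<integral>\<omega>. \<phi> \<bar>Y k \<omega>\<bar> \<partial>M))"
    by (rule sum_ennreal[symmetric]) (auto intro!: integral_nonneg_AE simp: \<phi>_nonneg)
  also have "\<dots> = (\<Sum>k=1..n. \<integral>\<^sup>+\<omega>. ennreal (\<phi> \<bar>Y k \<omega>\<bar>) \<partial>M)"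
    by (rule sum.cong[OF refl], rule nn_integral_eq_integral[symmetric]) (auto simp: \<phi>_nonneg int_Y)
  also note dom
  also have "ennreal (real n * K) * (\<integral>\<^sup>+\<omega>. ennreal (\<phi> \<bar>X \<omega>\<bar>) \<partial>M) = ennreal (real n * K * (\<integral>\<omega>. \<phi> \<bar>X \<omega>\<bar> \<partial>M))"
    using K by (simp add: nn_X ennreal_mult integral_nonneg_AE \<phi>_nonneg)
  finally show "(\<Sum>k=1..n. \<integral>\<omega>. \<phi> \<bar>Y k \<omega>\<bar> \<partial>M) \<le> real n * K * (\<integral>\<omega>. \<phi> \<bar>X \<omega>\<bar> \<partial>M)"
    using K by (subst (asm) ennreal_le_iff) (auto intro!: mult_nonneg_nonneg integral_nonneg_AE simp: \<phi>_nonneg)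
qed

lemma nn_integral_Icc_min:
  "0 \<le> b \<Longrightarrow> 0 \<le> y \<Longrightarrow> (\<integral>\<^sup>+t. ennreal (indicator {..b} t) * indicator {0..y} t \<partial>lborel) = ennreal (min y b)"
proof -
  assume "0 \<le> b" "0 \<le> y"
  have "(\<integral>\<^sup>+t. ennreal (indicator {..b} t) * indicator {0..y} t \<partial>lborel) = (\<integral>\<^sup>+t. indicator {0..min y b} t \<partial>lborel)"
    by (rule nn_integral_cong) (auto simp: indicator_def)
  also have "\<dots> = ennreal (min y b)" using \<open>0 \<le> b\<close> \<open>0 \<le> y\<close> by simp
  finally show ?thesis .
qed

lemma nn_integral_Icc_excess:
  "0 \<le> b \<Longrightarrow> 0 \<le> y \<Longrightarrow> (\<integral>\<^sup>+t. ennreal (indicator {b..} t) * indicator {0..y} t \<partial>lborel) = ennreal (max (y - b) 0)"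
proof -
  assume "0 \<le> b" "0 \<le> y"
  have "(\<integral>\<^sup>+t. ennreal (indicator {b..} t) * indicator {0..y} t \<partial>lborel) = (\<integral>\<^sup>+t. indicator {b..y} t \<partial>lborel)"
    by (rule nn_integral_cong) (use \<open>0 \<le> b\<close> in \<open>auto simp: indicator_def\<close>)
  also have "\<dots> = ennreal (max (y - b) 0)"
    by (cases "b \<le> y") (auto simp: ennreal_neg)
  finally show ?thesis .
qed

lemma nn_integral_Icc_min_square:
  "0 \<le> b \<Longrightarrow> 0 \<le> y \<Longrightarrow> (\<integral>\<^sup>+t. ennreal (2 * \<bar>t\<bar> * indicator {..b} t) * indicator {0..y} t \<partial>lborel) = ennreal ((min y b)\<^sup>2)"
proof -
  assume "0 \<le> b" "0 \<le> y"
  define c where "c = min y b"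
  have c: "0 \<le> c" using \<open>0 \<le> b\<close> \<open>0 \<le> y\<close> by (simp add: c_def)
  have "(\<integral>\<^sup>+t. ennreal (2 * \<bar>t\<bar> * indicator {..b} t) * indicator {0..y} t \<partial>lborel)
      = (\<integral>\<^sup>+t. ennreal (indicator {0..c} t * (2 * t)) \<partial>lborel)"
    by (rule nn_integral_cong) (auto simp: indicator_def c_def)
  also have "\<dots> = ennreal (c\<^sup>2)"
  proof (rule nn_integral_has_integral_lebesgue)
    have "\<And>x. (power2 has_real_derivative 2 * x) (at x within {0..c})"
      by (auto intro!: derivative_eq_intros)
    then show "((\<lambda>t. 2 * t) has_integral c\<^sup>2) {0..c}"
      using fundamental_theorem_of_calculus[OF c, of "\<lambda>t. t\<^sup>2" "\<lambda>t. 2 * t"]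
      by (simp add: has_real_derivative_iff_has_vector_derivative[symmetric])
  qed simp
  finally show ?thesis by (simp add: c_def)
qed

section \<open>Moment and tail inequalities\<close>

lemma (in prob_space) expectation_centered_square_le:
  fixes V :: "'a \<Rightarrow> real"
  assumes [measurable]: "V \<in> borel_measurable M" and B: "\<And>\<omega>. \<omega> \<in> space M \<Longrightarrow> \<bar>V \<omega>\<bar> \<le> B"
  shows "expectation (\<lambda>\<omega>. (V \<omega> - expectation V)\<^sup>2) \<le> expectation (\<lambda>\<omega>. (V \<omega>)\<^sup>2)"
proof -
  from not_empty obtain x0 where "x0 \<in> space M" by auto
  then have B0: "0 \<le> B" using B[of x0] abs_ge_zero[of "V x0"] by linarith
  have i1: "integrable M V" by (rule integrable_const_bound[where B=B]) (auto simp: B)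
  have i2: "integrable M (\<lambda>\<omega>. (V \<omega>)\<^sup>2)"
    by (rule integrable_const_bound[where B="B\<^sup>2"]) (use B0 in \<open>auto simp: B abs_le_square_iff[symmetric] power_abs[symmetric] intro!: power_mono\<close>)
  have "variance V = expectation (\<lambda>\<omega>. (V \<omega>)\<^sup>2) - (expectation V)\<^sup>2"
    by (rule variance_eq[OF i1 i2])
  then show ?thesis by simp
qed

lemma (in prob_space) abs_expectation_excess_le:
  fixes V :: "'a \<Rightarrow> real"
  assumes [measurable]: "V \<in> borel_measurable M" and int_V: "integrable M V" and b: "b \<ge> 0"
  shows "\<bar>expectation (\<lambda>\<omega>. V \<omega> - (if \<bar>V \<omega>\<bar> \<le> b then V \<omega> else 0))\<bar>
    \<le> expectation (\<lambda>\<omega>. max (\<bar>V \<omega>\<bar> - b) 0) + b * prob {\<omega>\<in>space M. b \<le> \<bar>V \<omega>\<bar>}"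
proof -
  have int_excess: "integrable M (\<lambda>\<omega>. max (\<bar>V \<omega>\<bar> - b) 0)"
    by (rule Bochner_Integration.integrable_bound[OF integrable_abs[OF int_V]]) (use b in \<open>auto intro!: AE_I2\<close>)
  have int_tail: "integrable M (\<lambda>\<omega>. b * indicator {\<omega>\<in>space M. b \<le> \<bar>V \<omega>\<bar>} \<omega>)"
    by (intro integrable_mult_right integrable_real_indicator) (auto simp: less_top[symmetric])
  have "\<bar>expectation (\<lambda>\<omega>. V \<omega> - (if \<bar>V \<omega>\<bar> \<le> b then V \<omega> else 0))\<bar>
      \<le> expectation (\<lambda>\<omega>. \<bar>V \<omega> - (if \<bar>V \<omega>\<bar> \<le> b then V \<omega> else 0)\<bar>)"
    by (rule integral_abs_bound)
  also have "\<dots> \<le> expectation (\<lambda>\<omega>. max (\<bar>V \<omega>\<bar> - b) 0 + b * indicator {\<omega>\<in>space M. b \<le> \<bar>V \<omega>\<bar>} \<omega>)"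
  proof (rule integral_mono)
    show "integrable M (\<lambda>\<omega>. \<bar>V \<omega> - (if \<bar>V \<omega>\<bar> \<le> b then V \<omega> else 0)\<bar>)"
      by (rule Bochner_Integration.integrable_bound[OF integrable_abs[OF int_V]]) (auto intro!: AE_I2)
    show "integrable M (\<lambda>\<omega>. max (\<bar>V \<omega>\<bar> - b) 0 + b * indicator {\<omega>\<in>space M. b \<le> \<bar>V \<omega>\<bar>} \<omega>)"
      using int_excess int_tail by (rule Bochner_Integration.integrable_add)
    show "\<bar>V \<omega> - (if \<bar>V \<omega>\<bar> \<le> b then V \<omega> else 0)\<bar> \<le> max (\<bar>V \<omega>\<bar> - b) 0 + b * indicator {\<omega>\<in>space M. b \<le> \<bar>V \<omega>\<bar>} \<omega>"
      if "\<omega> \<in> space M" for \<omega>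
      using that b by (auto simp: indicator_def)
  qed
  also have "\<dots> = expectation (\<lambda>\<omega>. max (\<bar>V \<omega>\<bar> - b) 0) + b * prob {\<omega>\<in>space M. b \<le> \<bar>V \<omega>\<bar>}"
    using int_excess by (subst Bochner_Integration.integral_add) (auto intro!: integrable_real_indicator simp: less_top[symmetric])
  finally show ?thesis .
qed

lemma (in prob_space) expectation_excess_plus_tail:
  fixes V :: "'a \<Rightarrow> real"
  assumes [measurable]: "V \<in> borel_measurable M" and int_V: "integrable M V" and b: "b \<ge> 0"
  shows "expectation (\<lambda>\<omega>. max (\<bar>V \<omega>\<bar> - b) 0) + b * prob {\<omega>\<in>space M. b \<le> \<bar>V \<omega>\<bar>}
    = expectation (\<lambda>\<omega>. if b \<le> \<bar>V \<omega>\<bar> then \<bar>V \<omega>\<bar> else 0)"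
proof -
  have int_excess: "integrable M (\<lambda>\<omega>. max (\<bar>V \<omega>\<bar> - b) 0)"
    by (rule Bochner_Integration.integrable_bound[OF integrable_abs[OF int_V]]) (use b in \<open>auto intro!: AE_I2\<close>)
  then have "expectation (\<lambda>\<omega>. max (\<bar>V \<omega>\<bar> - b) 0) + b * prob {\<omega>\<in>space M. b \<le> \<bar>V \<omega>\<bar>}
      = expectation (\<lambda>\<omega>. max (\<bar>V \<omega>\<bar> - b) 0 + b * indicator {\<omega>\<in>space M. b \<le> \<bar>V \<omega>\<bar>} \<omega>)"
    by (subst Bochner_Integration.integral_add) (auto intro!: integrable_real_indicator simp: less_top[symmetric])
  also have "\<dots> = expectation (\<lambda>\<omega>. if b \<le> \<bar>V \<omega>\<bar> then \<bar>V \<omega>\<bar> else 0)"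
    by (rule Bochner_Integration.integral_cong) (auto simp: indicator_def)
  finally show ?thesis .
qed

lemma (in prob_space) summable_expectation_bounded:
  fixes f :: "nat \<Rightarrow> 'a \<Rightarrow> real"
  assumes int: "\<And>m. integrable M (f m)" and nn: "\<And>m \<omega>. \<omega> \<in> space M \<Longrightarrow> 0 \<le> f m \<omega>"
    and inth: "integrable M h" and bnd: "\<And>N \<omega>. \<omega> \<in> space M \<Longrightarrow> (\<Sum>m<N. f m \<omega>) \<le> h \<omega>"
  shows "summable (\<lambda>m. expectation (f m))"
proof (rule summableI_nonneg_bounded)
  show "0 \<le> expectation (f m)" for m by (rule integral_nonneg_AE) (auto simp: nn)
  show "(\<Sum>m<N. expectation (f m)) \<le> expectation h" for N
  proof -
    have "(\<Sum>m<N. expectation (f m)) = expectation (\<lambda>\<omega>. \<Sum>m<N. f m \<omega>)"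
      by (rule Bochner_Integration.integral_sum[symmetric]) (simp add: int)
    also have "\<dots> \<le> expectation h"
      by (rule integral_mono) (auto simp: int inth bnd)
    finally show ?thesis .
  qed
qed

lemma (in prob_space) prob_sum_ge_indep_Chernoff:
  fixes W :: "nat \<Rightarrow> 'a \<Rightarrow> real"
  assumes fin: "finite I" and ind: "indep_vars (\<lambda>_. borel) W I" and s: "s > 0"
    and bnd: "\<And>k. k \<in> I \<Longrightarrow> (\<integral>\<^sup>+\<omega>. ennreal (exp (s * W k \<omega>)) \<partial>M) \<le> ennreal (exp (c k))"
  shows "prob {\<omega>\<in>space M. a \<le> (\<Sum>k\<in>I. W k \<omega>)} \<le> exp (- s * a + (\<Sum>k\<in>I. c k))"
proof -
  have Wm[measurable]: "\<And>k. k \<in> I \<Longrightarrow> W k \<in> borel_measurable M"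
    using ind unfolding indep_vars_def by auto
  have sm[measurable]: "(\<lambda>\<omega>. \<Sum>k\<in>I. W k \<omega>) \<in> borel_measurable M"
    by (rule borel_measurable_sum) (simp add: Wm)
  have "ennreal (prob {\<omega>\<in>space M. a \<le> (\<Sum>k\<in>I. W k \<omega>)}) = emeasure M {\<omega>\<in>space M. (\<Sum>k\<in>I. W k \<omega>) \<ge> a}"
    by (simp add: emeasure_eq_measure)
  also have "\<dots> \<le> ennreal (exp (-s * a)) * (\<integral>\<^sup>+\<omega>. ennreal (exp (s * (\<Sum>k\<in>I. W k \<omega>))) * indicator (space M) \<omega> \<partial>M)"
    by (rule Chernoff_ineq_nn_integral_ge[OF s]) auto
  also have "(\<integral>\<^sup>+\<omega>. ennreal (exp (s * (\<Sum>k\<in>I. W k \<omega>))) * indicator (space M) \<omega> \<partial>M)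
      = (\<integral>\<^sup>+\<omega>. (\<Prod>k\<in>I. ennreal (exp (s * W k \<omega>))) \<partial>M)"
    by (intro nn_integral_cong) (simp add: sum_distrib_left exp_sum fin prod_ennreal)
  also have "\<dots> = (\<Prod>k\<in>I. \<integral>\<^sup>+\<omega>. ennreal (exp (s * W k \<omega>)) \<partial>M)"
    by (intro indep_vars_nn_integral fin indep_vars_compose2[OF ind]) auto
  also have "ennreal (exp (-s * a)) * \<dots> \<le> ennreal (exp (-s * a)) * (\<Prod>k\<in>I. ennreal (exp (c k)))"
    by (intro mult_left_mono prod_mono_ennreal bnd) auto
  also have "\<dots> = ennreal (exp (- s * a + (\<Sum>k\<in>I. c k)))"
  proof -
    have "(\<Prod>k\<in>I. ennreal (exp (c k))) = ennreal (exp (\<Sum>k\<in>I. c k))"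
      by (simp add: prod_ennreal exp_sum fin)
    then have "ennreal (exp (-s * a)) * (\<Prod>k\<in>I. ennreal (exp (c k))) = ennreal (exp (-s * a) * exp (\<Sum>k\<in>I. c k))"
      by (simp add: ennreal_mult)
    then show ?thesis by (simp add: exp_add[symmetric])
  qed
  finally show ?thesis
    by (subst (asm) ennreal_le_iff) auto
qed

lemma (in prob_space) nn_integral_exp_centered_le:
  fixes Y :: "'a \<Rightarrow> real"
  assumes [measurable]: "Y \<in> borel_measurable M" and B: "\<And>\<omega>. \<omega> \<in> space M \<Longrightarrow> \<bar>Y \<omega>\<bar> \<le> B"
    and s: "s > 0" "s * (2 * B) \<le> 1"
  shows "(\<integral>\<^sup>+\<omega>. ennreal (exp (s * (Y \<omega> - expectation Y))) \<partial>M) \<le> ennreal (exp (s\<^sup>2 * expectation (\<lambda>\<omega>. (Y \<omega>)\<^sup>2)))"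
proof -
  define Z where "Z = (\<lambda>\<omega>. Y \<omega> - expectation Y)"
  have int_Y: "integrable M Y"
    by (rule integrable_const_bound[where B=B]) (auto simp: B)
  have "\<bar>expectation Y\<bar> \<le> expectation (\<lambda>\<omega>. B)"
    by (rule order_trans[OF integral_abs_bound integral_mono]) (auto simp: B int_Y)
  then have Z_bound: "\<bar>Z \<omega>\<bar> \<le> 2 * B" if "\<omega> \<in> space M" for \<omega>
    using B[OF that] by (simp add: Z_def prob_space)
  have sZ_bound: "\<bar>s * Z \<omega>\<bar> \<le> 1" if "\<omega> \<in> space M" for \<omega>
  proof -
    have "\<bar>s * Z \<omega>\<bar> = s * \<bar>Z \<omega>\<bar>" using s by (simp add: abs_mult)
    also have "\<dots> \<le> s * (2 * B)" using Z_bound[OF that] s by (intro mult_left_mono) auto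
    finally show ?thesis using s by simp
  qed
  have int_exp: "integrable M (\<lambda>\<omega>. exp (s * Z \<omega>))"
    by (rule integrable_const_bound[where B="exp 1"]) (auto simp: Z_def dest!: sZ_bound)
  have int_Z: "integrable M Z" using int_Y by (simp add: Z_def)
  have int_Z2: "integrable M (\<lambda>\<omega>. (Z \<omega>)\<^sup>2)"
  proof (rule integrable_const_bound[where B="(2 * B)\<^sup>2"])
    show "AE \<omega> in M. norm ((Z \<omega>)\<^sup>2) \<le> (2 * B)\<^sup>2"
    proof (rule AE_I2)
      fix \<omega> assume "\<omega> \<in> space M"
      then have "\<bar>Z \<omega>\<bar>\<^sup>2 \<le> (2 * B)\<^sup>2" by (intro power_mono Z_bound) auto
      then show "norm ((Z \<omega>)\<^sup>2) \<le> (2 * B)\<^sup>2" by simp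
    qed
  qed (simp add: Z_def)
  have "expectation (\<lambda>\<omega>. exp (s * Z \<omega>)) \<le> expectation (\<lambda>\<omega>. 1 + s * Z \<omega> + s\<^sup>2 * (Z \<omega>)\<^sup>2)"
  proof (rule integral_mono[OF int_exp])
    show "integrable M (\<lambda>\<omega>. 1 + s * Z \<omega> + s\<^sup>2 * (Z \<omega>)\<^sup>2)" using int_Z int_Z2 by simp
    show "exp (s * Z \<omega>) \<le> 1 + s * Z \<omega> + s\<^sup>2 * (Z \<omega>)\<^sup>2" if "\<omega> \<in> space M" for \<omega>
      using exp_le_quadratic[OF sZ_bound[OF that]] by (simp add: power_mult_distrib)
  qed
  also have "\<dots> = 1 + s\<^sup>2 * expectation (\<lambda>\<omega>. (Z \<omega>)\<^sup>2)"
    using int_Y int_Z int_Z2 by (simp add: Z_def prob_space)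
  also have "\<dots> \<le> 1 + s\<^sup>2 * expectation (\<lambda>\<omega>. (Y \<omega>)\<^sup>2)"
    unfolding Z_def by (intro add_left_mono mult_left_mono expectation_centered_square_le[of _ B]) (auto simp: B)
  also have "\<dots> \<le> exp (s\<^sup>2 * expectation (\<lambda>\<omega>. (Y \<omega>)\<^sup>2))"
    by (rule exp_ge_add_one_self)
  finally show ?thesis
    using int_exp by (simp add: Z_def nn_integral_eq_integral ennreal_leI)
qed

lemma (in prob_space) nn_integral_exp_indicator_le:
  assumes [measurable]: "A \<in> sets M" and s: "s > 0"
  shows "(\<integral>\<^sup>+\<omega>. ennreal (exp (s * indicator A \<omega>)) \<partial>M) \<le> ennreal (exp ((exp s - 1) * prob A))"
proof -
  have "(\<integral>\<^sup>+\<omega>. ennreal (exp (s * indicator A \<omega>)) \<partial>M) = (\<integral>\<^sup>+\<omega>. ennreal (1 + (exp s - 1) * indicator A \<omega>) \<partial>M)"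
    by (rule nn_integral_cong) (auto simp: indicator_def)
  also have eq: "\<dots> = ennreal (expectation (\<lambda>\<omega>. 1 + (exp s - 1) * indicator A \<omega>))"
    using s by (intro nn_integral_eq_integral) (auto simp: indicator_def intro!: integrable_const_bound[where B="exp s"])
  finally have eq: "(\<integral>\<^sup>+\<omega>. ennreal (exp (s * indicator A \<omega>)) \<partial>M) = ennreal (expectation (\<lambda>\<omega>. 1 + (exp s - 1) * indicator A \<omega>))" .
  have "expectation (\<lambda>\<omega>. 1 + (exp s - 1) * indicator A \<omega>) = expectation (\<lambda>\<omega>. 1) + expectation (\<lambda>\<omega>. (exp s - 1) * indicator A \<omega>)"
    by (rule Bochner_Integration.integral_add) (auto intro!: integrable_real_indicator simp: less_top[symmetric])
  also have "\<dots> = 1 + (exp s - 1) * prob A"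
    by (simp add: prob_space)
  also have "\<dots> \<le> exp ((exp s - 1) * prob A)" by (rule exp_ge_add_one_self)
  finally show ?thesis using eq by (simp add: ennreal_leI)
qed

lemma (in prob_space) expectation_square_sum_indep:
  fixes Z :: "nat \<Rightarrow> 'a \<Rightarrow> real"
  assumes fin: "finite I" and ind: "indep_vars (\<lambda>_. borel) Z I"
    and bnd: "\<And>k \<omega>. k \<in> I \<Longrightarrow> \<omega> \<in> space M \<Longrightarrow> \<bar>Z k \<omega>\<bar> \<le> B"
    and mean: "\<And>k. k \<in> I \<Longrightarrow> expectation (Z k) = 0"
  shows "expectation (\<lambda>\<omega>. (\<Sum>k\<in>I. Z k \<omega>)\<^sup>2) = (\<Sum>k\<in>I. expectation (\<lambda>\<omega>. (Z k \<omega>)\<^sup>2))"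
proof -
  have Zm[measurable]: "\<And>k. k \<in> I \<Longrightarrow> Z k \<in> borel_measurable M"
    using ind unfolding indep_vars_def by auto
  have intZ: "integrable M (Z k)" if "k \<in> I" for k
    by (rule integrable_const_bound[where B=B]) (use that bnd in auto)
  have intP: "integrable M (\<lambda>\<omega>. Z j \<omega> * Z k \<omega>)" if "j \<in> I" "k \<in> I" for j k
  proof (rule integrable_const_bound[where B="B * B"])
    show "AE x in M. norm (Z j x * Z k x) \<le> B * B"
    proof (rule AE_I2)
      fix x assume x: "x \<in> space M"
      have "\<bar>Z j x\<bar> * \<bar>Z k x\<bar> \<le> B * B"
        by (rule mult_mono) (use bnd[OF that(1) x] bnd[OF that(2) x] in auto)
      then show "norm (Z j x * Z k x) \<le> B * B" by (simp add: abs_mult)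
    qed
  qed (use that in simp)
  have cross: "expectation (\<lambda>\<omega>. Z j \<omega> * Z k \<omega>) = 0" if "j \<in> I" "k \<in> I" "j \<noteq> k" for j k
  proof -
    have ind2: "indep_vars (\<lambda>_. borel) Z {j, k}"
      by (rule indep_vars_subset[OF ind]) (use that in auto)
    have "expectation (\<lambda>\<omega>. \<Prod>i\<in>{j,k}. Z i \<omega>) = (\<Prod>i\<in>{j,k}. expectation (Z i))"
      by (rule indep_vars_lebesgue_integral[OF _ ind2]) (use that intZ in auto)
    then show ?thesis using that mean by simp
  qed
  have "expectation (\<lambda>\<omega>. (\<Sum>k\<in>I. Z k \<omega>)\<^sup>2) = expectation (\<lambda>\<omega>. \<Sum>j\<in>I. \<Sum>k\<in>I. Z j \<omega> * Z k \<omega>)"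
    by (simp add: power2_eq_square sum_product)
  also have "\<dots> = (\<Sum>j\<in>I. \<Sum>k\<in>I. expectation (\<lambda>\<omega>. Z j \<omega> * Z k \<omega>))"
    by (subst Bochner_Integration.integral_sum) (auto intro!: sum.cong Bochner_Integration.integral_sum intP Bochner_Integration.integrable_sum)
  also have "\<dots> = (\<Sum>j\<in>I. \<Sum>k\<in>I. if j = k then expectation (\<lambda>\<omega>. (Z k \<omega>)\<^sup>2) else 0)"
    by (intro sum.cong refl) (auto simp: cross power2_eq_square)
  also have "\<dots> = (\<Sum>k\<in>I. expectation (\<lambda>\<omega>. (Z k \<omega>)\<^sup>2))"
    using fin by simp
  finally show ?thesis .
qed

lemma (in prob_space) prob_abs_sum_ge_indep_Chebyshev:
  fixes Z :: "nat \<Rightarrow> 'a \<Rightarrow> real"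
  assumes fin: "finite I" and ind: "indep_vars (\<lambda>_. borel) Z I"
    and bnd: "\<And>k \<omega>. k \<in> I \<Longrightarrow> \<omega> \<in> space M \<Longrightarrow> \<bar>Z k \<omega>\<bar> \<le> B"
    and mean: "\<And>k. k \<in> I \<Longrightarrow> expectation (Z k) = 0" and x: "x > 0"
  shows "prob {\<omega>\<in>space M. x \<le> \<bar>\<Sum>k\<in>I. Z k \<omega>\<bar>} \<le> (\<Sum>k\<in>I. expectation (\<lambda>\<omega>. (Z k \<omega>)\<^sup>2)) / x\<^sup>2"
proof -
  have Zm[measurable]: "\<And>k. k \<in> I \<Longrightarrow> Z k \<in> borel_measurable M"
    using ind unfolding indep_vars_def by auto
  have sm[measurable]: "(\<lambda>\<omega>. \<Sum>k\<in>I. Z k \<omega>) \<in> borel_measurable M"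
    by (rule borel_measurable_sum) (simp add: Zm)
  have B0: "\<And>\<omega>. \<omega> \<in> space M \<Longrightarrow> \<bar>\<Sum>k\<in>I. Z k \<omega>\<bar> \<le> real (card I) * B"
  proof -
    fix \<omega> assume "\<omega> \<in> space M"
    have "\<bar>\<Sum>k\<in>I. Z k \<omega>\<bar> \<le> (\<Sum>k\<in>I. \<bar>Z k \<omega>\<bar>)" by (rule sum_abs)
    also have "\<dots> \<le> (\<Sum>k\<in>I. B)" by (rule sum_mono) (use bnd \<open>\<omega> \<in> space M\<close> in auto)
    finally show "\<bar>\<Sum>k\<in>I. Z k \<omega>\<bar> \<le> real (card I) * B" by simp
  qed
  have int: "integrable M (\<lambda>\<omega>. (\<Sum>k\<in>I. Z k \<omega>)\<^sup>2)"
  proof (rule integrable_const_bound[where B="(real (card I) * B)\<^sup>2"])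
    show "AE x in M. norm ((\<Sum>k\<in>I. Z k x)\<^sup>2) \<le> (real (card I) * B)\<^sup>2"
    proof (rule AE_I2)
      fix x assume "x \<in> space M"
      then have "\<bar>\<Sum>k\<in>I. Z k x\<bar> \<le> \<bar>real (card I) * B\<bar>" using B0 by fastforce
      then show "norm ((\<Sum>k\<in>I. Z k x)\<^sup>2) \<le> (real (card I) * B)\<^sup>2"
        by (simp add: abs_le_square_iff)
    qed
  qed simp
  have "{\<omega>\<in>space M. x \<le> \<bar>\<Sum>k\<in>I. Z k \<omega>\<bar>} = {\<omega>\<in>space M. (\<Sum>k\<in>I. Z k \<omega>)\<^sup>2 \<ge> x\<^sup>2}"
    using x by (auto simp: abs_le_square_iff[symmetric])
  also have "prob \<dots> \<le> expectation (\<lambda>\<omega>. (\<Sum>k\<in>I. Z k \<omega>)\<^sup>2) / x\<^sup>2"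
    by (rule integral_Markov_inequality_measure[OF int]) (use x in auto)
  also have "\<dots> = (\<Sum>k\<in>I. expectation (\<lambda>\<omega>. (Z k \<omega>)\<^sup>2)) / x\<^sup>2"
    by (simp add: expectation_square_sum_indep[OF fin ind bnd mean])
  finally show ?thesis .
qed

lemma (in prob_space) prob_sum_centered_ge_indep_Bernstein:
  fixes Y :: "nat \<Rightarrow> 'a \<Rightarrow> real"
  assumes fin: "finite I" and ind: "indep_vars (\<lambda>_. borel) Y I"
    and bnd: "\<And>k \<omega>. k \<in> I \<Longrightarrow> \<omega> \<in> space M \<Longrightarrow> \<bar>Y k \<omega>\<bar> \<le> B" and B: "B > 0"
  shows "prob {\<omega>\<in>space M. x \<le> (\<Sum>k\<in>I. Y k \<omega> - expectation (Y k))}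
    \<le> exp (- (1 / (2 * B)) * x + (1 / (2 * B))\<^sup>2 * (\<Sum>k\<in>I. expectation (\<lambda>\<omega>. (Y k \<omega>)\<^sup>2)))"
proof -
  define s where "s = 1 / (2 * B)"
  have s: "s > 0" "s * (2 * B) \<le> 1" using B by (auto simp: s_def)
  have Y_measurable: "Y k \<in> borel_measurable M" if "k \<in> I" for k
    using ind that unfolding indep_vars_def by auto
  have "indep_vars (\<lambda>_. borel) (\<lambda>k \<omega>. (\<lambda>k y. y - expectation (Y k)) k (Y k \<omega>)) I"
    by (rule indep_vars_compose2[OF ind]) measurable
  then have "prob {\<omega>\<in>space M. x \<le> (\<Sum>k\<in>I. Y k \<omega> - expectation (Y k))}
      \<le> exp (- s * x + (\<Sum>k\<in>I. s\<^sup>2 * expectation (\<lambda>\<omega>. (Y k \<omega>)\<^sup>2)))"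
  proof (rule prob_sum_ge_indep_Chernoff[OF fin _ s(1)])
    show "(\<integral>\<^sup>+\<omega>. ennreal (exp (s * (Y k \<omega> - expectation (Y k)))) \<partial>M) \<le> ennreal (exp (s\<^sup>2 * expectation (\<lambda>\<omega>. (Y k \<omega>)\<^sup>2)))"
      if "k \<in> I" for k
      using that bnd s by (intro nn_integral_exp_centered_le Y_measurable) auto
  qed
  then show ?thesis by (simp add: s_def sum_distrib_left)
qed

section \<open>Truncating the rows of a weakly mean dominated array\<close>

locale dominated_array = prob_space M for M :: "'a measure" +
  fixes X :: "'a \<Rightarrow> real" and Xa :: "nat \<Rightarrow> nat \<Rightarrow> 'a \<Rightarrow> real" and K r p :: real
  assumes X_measurable[measurable]: "X \<in> borel_measurable M"
    and indep_row: "\<And>n. n \<ge> 1 \<Longrightarrow> indep_vars (\<lambda>_. borel) (\<lambda>k. Xa k n) {1..n}"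
    and dominated_row: "\<And>n. n \<ge> 1 \<Longrightarrow> weakly_mean_dominated M K (\<lambda>k. Xa k n) n X"
    and r_ge_1: "r \<ge> 1" and p_pos: "0 < p" and p_less_2: "p < 2"
    and integrable_moment: "integrable M (\<lambda>\<omega>. \<bar>X \<omega>\<bar> powr (r * p))"
    and row_mean_zero: "p \<ge> 1 \<Longrightarrow> (\<forall>n\<ge>1. (\<integral>\<omega>. (\<Sum>k=1..n. Xa k n \<omega>) \<partial>M) = 0)"
begin

definition trunc :: "nat \<Rightarrow> real \<Rightarrow> nat \<Rightarrow> 'a \<Rightarrow> real" where
  "trunc n b k \<omega> = (if \<bar>Xa k n \<omega>\<bar> \<le> b then Xa k n \<omega> else 0)"

lemma Xa_measurable: "n \<ge> 1 \<Longrightarrow> k \<in> {1..n} \<Longrightarrow> Xa k n \<in> borel_measurable M"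
  using indep_row[of n] unfolding indep_vars_def by auto

lemma K_ge_1: "K \<ge> 1"
  using weakly_mean_dominated_K_ge_1[OF dominated_row[of 1]] by simp

lemma trunc_measurable: "n \<ge> 1 \<Longrightarrow> k \<in> {1..n} \<Longrightarrow> trunc n b k \<in> borel_measurable M"
  unfolding trunc_def using Xa_measurable[of n k] by measurable

lemma abs_trunc_le_min: "b \<ge> 0 \<Longrightarrow> \<bar>trunc n b k \<omega>\<bar> \<le> min \<bar>Xa k n \<omega>\<bar> b"
  unfolding trunc_def by auto

lemma abs_trunc_le: "b \<ge> 0 \<Longrightarrow> \<bar>trunc n b k \<omega>\<bar> \<le> b"
  unfolding trunc_def by auto

lemma integrable_trunc: "n \<ge> 1 \<Longrightarrow> k \<in> {1..n} \<Longrightarrow> b \<ge> 0 \<Longrightarrow> integrable M (trunc n b k)"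
  by (rule integrable_const_bound[where B=b]) (auto simp: abs_trunc_le trunc_measurable)

lemma integrable_trunc_square:
  assumes "n \<ge> 1" "k \<in> {1..n}" "b \<ge> 0"
  shows "integrable M (\<lambda>\<omega>. (trunc n b k \<omega>)\<^sup>2)"
proof (rule integrable_const_bound[where B="b\<^sup>2"])
  show "AE x in M. norm ((trunc n b k x)\<^sup>2) \<le> b\<^sup>2"
    using abs_trunc_le assms by (auto simp: abs_le_square_iff[symmetric])
  show "(\<lambda>\<omega>. (trunc n b k \<omega>)\<^sup>2) \<in> borel_measurable M" using trunc_measurable assms by measurable
qed

lemma integrable_abs_X_powr:
  assumes "0 < a" "a \<le> r * p"
  shows "integrable M (\<lambda>\<omega>. \<bar>X \<omega>\<bar> powr a)"
proof (rule Bochner_Integration.integrable_bound)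
  show "integrable M (\<lambda>\<omega>. 1 + \<bar>X \<omega>\<bar> powr (r * p))" using integrable_moment by simp
  have "\<bar>X \<omega>\<bar> powr a \<le> 1 + \<bar>X \<omega>\<bar> powr (r * p)" for \<omega>
    using powr_le_1_plus_powr[OF abs_ge_zero assms] .
  moreover have "0 \<le> 1 + \<bar>X \<omega>\<bar> powr (r * p)" for \<omega>
    by (simp add: add_nonneg_nonneg)
  ultimately show "AE \<omega> in M. norm (\<bar>X \<omega>\<bar> powr a) \<le> norm (1 + \<bar>X \<omega>\<bar> powr (r * p))"
    by (intro AE_I2) simp
qed measurable

lemma sum_expectation_trunc_square_le_min:
  assumes n: "n \<ge> 1" and b: "b \<ge> 0"
  shows "(\<Sum>k=1..n. expectation (\<lambda>\<omega>. (trunc n b k \<omega>)\<^sup>2)) \<le> real n * K * expectation (\<lambda>\<omega>. (min \<bar>X \<omega>\<bar> b)\<^sup>2)"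
proof -
  have int_X: "integrable M (\<lambda>\<omega>. (min \<bar>X \<omega>\<bar> b)\<^sup>2)"
    by (rule integrable_const_bound[where B="b\<^sup>2"]) (use b in \<open>auto intro!: AE_I2 power_mono\<close>)
  note dom = weakly_mean_dominated_integral[OF dominated_row[OF n] n Xa_measurable[OF n] X_measurable,
      of "\<lambda>t. 2 * \<bar>t\<bar> * indicator {..b} t" "\<lambda>y. (min y b)\<^sup>2"]
  have int_Xa: "\<forall>k\<in>{1..n}. integrable M (\<lambda>\<omega>. (min \<bar>Xa k n \<omega>\<bar> b)\<^sup>2)"
   and sum_Xa: "(\<Sum>k=1..n. expectation (\<lambda>\<omega>. (min \<bar>Xa k n \<omega>\<bar> b)\<^sup>2)) \<le> real n * K * expectation (\<lambda>\<omega>. (min \<bar>X \<omega>\<bar> b)\<^sup>2)"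
    using dom nn_integral_Icc_min_square[OF b] int_X by (auto simp: b)
  have "(\<Sum>k=1..n. expectation (\<lambda>\<omega>. (trunc n b k \<omega>)\<^sup>2)) \<le> (\<Sum>k=1..n. expectation (\<lambda>\<omega>. (min \<bar>Xa k n \<omega>\<bar> b)\<^sup>2))"
  proof (rule sum_mono)
    fix k assume k: "k \<in> {1..n}"
    show "expectation (\<lambda>\<omega>. (trunc n b k \<omega>)\<^sup>2) \<le> expectation (\<lambda>\<omega>. (min \<bar>Xa k n \<omega>\<bar> b)\<^sup>2)"
    proof (rule integral_mono)
      show "integrable M (\<lambda>\<omega>. (trunc n b k \<omega>)\<^sup>2)" by (rule integrable_trunc_square[OF n k b])
      show "integrable M (\<lambda>\<omega>. (min \<bar>Xa k n \<omega>\<bar> b)\<^sup>2)" using int_Xa k by blast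
      show "(trunc n b k \<omega>)\<^sup>2 \<le> (min \<bar>Xa k n \<omega>\<bar> b)\<^sup>2" for \<omega>
        using abs_trunc_le_min[OF b, of n k \<omega>] b by (metis abs_ge_zero abs_le_square_iff abs_of_nonneg min_def)
    qed
  qed
  also note sum_Xa
  finally show ?thesis .
qed

lemma sum_expectation_trunc_square_le:
  assumes n: "n \<ge> 1" and b: "b \<ge> 1"
  shows "(\<Sum>k=1..n. expectation (\<lambda>\<omega>. (trunc n b k \<omega>)\<^sup>2))
    \<le> real n * K * (b powr (2 - min (r * p) 2) * (1 + expectation (\<lambda>\<omega>. \<bar>X \<omega>\<bar> powr (r * p))))"
proof -
  have rp: "0 < r * p" using r_ge_1 p_pos by simp
  have "expectation (\<lambda>\<omega>. (min \<bar>X \<omega>\<bar> b)\<^sup>2) \<le> expectation (\<lambda>\<omega>. b powr (2 - min (r * p) 2) * (1 + \<bar>X \<omega>\<bar> powr (r * p)))"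
  proof (rule integral_mono)
    show "integrable M (\<lambda>\<omega>. (min \<bar>X \<omega>\<bar> b)\<^sup>2)"
      by (rule integrable_const_bound[where B="b\<^sup>2"]) (use b in \<open>auto intro!: AE_I2 power_mono\<close>)
    show "integrable M (\<lambda>\<omega>. b powr (2 - min (r * p) 2) * (1 + \<bar>X \<omega>\<bar> powr (r * p)))"
      using integrable_moment by simp
    show "(min \<bar>X \<omega>\<bar> b)\<^sup>2 \<le> b powr (2 - min (r * p) 2) * (1 + \<bar>X \<omega>\<bar> powr (r * p))" for \<omega>
      by (rule min_power2_le_powr[OF _ b rp]) simp
  qed
  also have "\<dots> = b powr (2 - min (r * p) 2) * (1 + expectation (\<lambda>\<omega>. \<bar>X \<omega>\<bar> powr (r * p)))"
    using integrable_moment by (simp add: prob_space)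
  finally have "real n * K * expectation (\<lambda>\<omega>. (min \<bar>X \<omega>\<bar> b)\<^sup>2) \<le> real n * K * \<dots>"
    using K_ge_1 by (intro mult_left_mono) auto
  with sum_expectation_trunc_square_le_min[OF n, of b] b show ?thesis by linarith
qed

lemma abs_sum_expectation_trunc_le_min:
  assumes n: "n \<ge> 1" and b: "0 \<le> b" "b \<le> c"
  shows "\<bar>\<Sum>k=1..n. expectation (trunc n b k)\<bar> \<le> real n * K * expectation (\<lambda>\<omega>. min \<bar>X \<omega>\<bar> c)"
proof -
  have c: "c \<ge> 0" using b by simp
  have int_X: "integrable M (\<lambda>\<omega>. min \<bar>X \<omega>\<bar> c)"
    by (rule integrable_const_bound[where B=c]) (use c in \<open>auto intro!: AE_I2\<close>)
  note dom = weakly_mean_dominated_integral[OF dominated_row[OF n] n Xa_measurable[OF n] X_measurable,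
      of "\<lambda>t. indicator {..c} t" "\<lambda>y. min y c"]
  have int_Xa: "\<forall>k\<in>{1..n}. integrable M (\<lambda>\<omega>. min \<bar>Xa k n \<omega>\<bar> c)"
   and sum_Xa: "(\<Sum>k=1..n. expectation (\<lambda>\<omega>. min \<bar>Xa k n \<omega>\<bar> c)) \<le> real n * K * expectation (\<lambda>\<omega>. min \<bar>X \<omega>\<bar> c)"
    using dom nn_integral_Icc_min[OF c] int_X c by auto
  have "\<bar>\<Sum>k=1..n. expectation (trunc n b k)\<bar> \<le> (\<Sum>k=1..n. \<bar>expectation (trunc n b k)\<bar>)" by (rule sum_abs)
  also have "\<dots> \<le> (\<Sum>k=1..n. expectation (\<lambda>\<omega>. min \<bar>Xa k n \<omega>\<bar> c))"
  proof (rule sum_mono)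
    fix k assume k: "k \<in> {1..n}"
    have "\<bar>expectation (trunc n b k)\<bar> \<le> expectation (\<lambda>\<omega>. \<bar>trunc n b k \<omega>\<bar>)" by (rule integral_abs_bound)
    also have "\<dots> \<le> expectation (\<lambda>\<omega>. min \<bar>Xa k n \<omega>\<bar> c)"
    proof (rule integral_mono)
      show "integrable M (\<lambda>\<omega>. \<bar>trunc n b k \<omega>\<bar>)" using integrable_trunc[OF n k b(1)] by simp
      show "integrable M (\<lambda>\<omega>. min \<bar>Xa k n \<omega>\<bar> c)" using int_Xa k by blast
      show "\<bar>trunc n b k \<omega>\<bar> \<le> min \<bar>Xa k n \<omega>\<bar> c" for \<omega>
        using abs_trunc_le_min[OF b(1), of n k \<omega>] b(2) by linarith
    qed
    finally show "\<bar>expectation (trunc n b k)\<bar> \<le> expectation (\<lambda>\<omega>. min \<bar>Xa k n \<omega>\<bar> c)" .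
  qed
  also note sum_Xa
  finally show ?thesis .
qed

lemma abs_sum_expectation_trunc_le_tail:
  assumes n: "n \<ge> 1" and b: "b \<ge> 0" and p: "p \<ge> 1"
  shows "\<bar>\<Sum>k=1..n. expectation (trunc n b k)\<bar> \<le> real n * K * expectation (\<lambda>\<omega>. if b \<le> \<bar>X \<omega>\<bar> then \<bar>X \<omega>\<bar> else 0)"
proof -
  have "1 * 1 \<le> r * p" using r_ge_1 p by (intro mult_mono) auto
  then have int_X: "integrable M (\<lambda>\<omega>. \<bar>X \<omega>\<bar>)" using integrable_abs_X_powr[of 1] by simp
  then have int_X': "integrable M X" using integrable_abs_iff[OF X_measurable] by simp
  have int_excess: "integrable M (\<lambda>\<omega>. max (\<bar>X \<omega>\<bar> - b) 0)"
    by (rule Bochner_Integration.integrable_bound[OF int_X]) (use b in \<open>auto intro!: AE_I2\<close>)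
  have "\<forall>k\<in>{1..n}. integrable M (\<lambda>\<omega>. \<bar>Xa k n \<omega>\<bar>)"
    by (rule weakly_mean_dominated_integral(1)[OF dominated_row[OF n] n Xa_measurable[OF n] X_measurable,
      of "\<lambda>_. 1" "\<lambda>y. y"]) (auto simp: int_X)
  then have int_Xa: "integrable M (Xa k n)" if "k \<in> {1..n}" for k
    using that integrable_abs_iff[OF Xa_measurable[OF n that]] by auto
  note dom = weakly_mean_dominated_integral(2)[OF dominated_row[OF n] n Xa_measurable[OF n] X_measurable,
      of "\<lambda>t. indicator {b..} t" "\<lambda>y. max (y - b) 0"]
  have sum_excess: "(\<Sum>k=1..n. expectation (\<lambda>\<omega>. max (\<bar>Xa k n \<omega>\<bar> - b) 0))
      \<le> real n * K * expectation (\<lambda>\<omega>. max (\<bar>X \<omega>\<bar> - b) 0)"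
    by (rule dom) (auto simp: int_excess nn_integral_Icc_excess[OF b])
  have "(\<Sum>k=1..n. expectation (Xa k n)) = expectation (\<lambda>\<omega>. \<Sum>k=1..n. Xa k n \<omega>)"
    by (rule Bochner_Integration.integral_sum[symmetric]) (use int_Xa in auto)
  also have "\<dots> = 0" using row_mean_zero p n by auto
  finally have mean_zero: "(\<Sum>k=1..n. expectation (Xa k n)) = 0" .
  have "(\<Sum>k=1..n. expectation (\<lambda>\<omega>. Xa k n \<omega> - trunc n b k \<omega>))
      = (\<Sum>k=1..n. expectation (Xa k n)) - (\<Sum>k=1..n. expectation (trunc n b k))"
    unfolding sum_subtractf[symmetric]
    by (intro sum.cong refl Bochner_Integration.integral_diff int_Xa integrable_trunc[OF n _ b]) auto
  then have "\<bar>\<Sum>k=1..n. expectation (trunc n b k)\<bar> = \<bar>\<Sum>k=1..n. expectation (\<lambda>\<omega>. Xa k n \<omega> - trunc n b k \<omega>)\<bar>"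
    using mean_zero by simp
  also have "\<dots> \<le> (\<Sum>k=1..n. \<bar>expectation (\<lambda>\<omega>. Xa k n \<omega> - trunc n b k \<omega>)\<bar>)"
    by (rule sum_abs)
  also have "\<dots> \<le> (\<Sum>k=1..n. expectation (\<lambda>\<omega>. max (\<bar>Xa k n \<omega>\<bar> - b) 0) + b * prob {\<omega>\<in>space M. b \<le> \<bar>Xa k n \<omega>\<bar>})"
    unfolding trunc_def
    by (intro sum_mono abs_expectation_excess_le Xa_measurable[OF n] int_Xa b) auto
  also have "\<dots> \<le> real n * K * expectation (\<lambda>\<omega>. max (\<bar>X \<omega>\<bar> - b) 0) + b * (real n * K * prob {\<omega>\<in>space M. b \<le> \<bar>X \<omega>\<bar>})"
    unfolding sum.distrib sum_distrib_left[symmetric]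
    using sum_excess weakly_mean_dominated_sum_prob[OF dominated_row[OF n] n, of b] b
    by (intro add_mono mult_left_mono) auto
  also have "\<dots> = real n * K * expectation (\<lambda>\<omega>. if b \<le> \<bar>X \<omega>\<bar> then \<bar>X \<omega>\<bar> else 0)"
    by (simp add: algebra_simps flip: expectation_excess_plus_tail[OF X_measurable int_X' b])
  finally show ?thesis .
qed

lemma expectation_min_scaled_tendsto_0:
  assumes p: "p < 1"
  shows "(\<lambda>n. expectation (\<lambda>\<omega>. real n powr (1 - 1/p) * min \<bar>X \<omega>\<bar> (real n powr (1/p)))) \<longlonglongrightarrow> 0"
proof -
  have "(\<lambda>n. expectation (\<lambda>\<omega>. real n powr (1 - 1/p) * min \<bar>X \<omega>\<bar> (real n powr (1/p)))) \<longlonglongrightarrow> expectation (\<lambda>\<omega>. 0)"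
  proof (rule integral_dominated_convergence[where w = "\<lambda>\<omega>. \<bar>X \<omega>\<bar> powr p"])
    show "integrable M (\<lambda>\<omega>. \<bar>X \<omega>\<bar> powr p)"
      using integrable_abs_X_powr[of p] p_pos r_ge_1 by simp
    show "AE x in M. norm (real n powr (1 - 1/p) * min \<bar>X x\<bar> (real n powr (1/p))) \<le> \<bar>X x\<bar> powr p" for n
      using powr_mult_min_le_powr[OF p_pos p] by (auto intro!: AE_I2)
    have vanish: "(\<lambda>n. real n powr (1 - 1/p)) \<longlonglongrightarrow> 0"
      using p p_pos by (intro tendsto_neg_powr filterlim_real_sequentially) (auto simp: field_simps)
    show "AE x in M. (\<lambda>n. real n powr (1 - 1/p) * min \<bar>X x\<bar> (real n powr (1/p))) \<longlonglongrightarrow> 0"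
    proof (rule AE_I2)
      fix x
      show "(\<lambda>n. real n powr (1 - 1/p) * min \<bar>X x\<bar> (real n powr (1/p))) \<longlonglongrightarrow> 0"
      proof (rule tendsto_sandwich[where f="\<lambda>_. 0" and h="\<lambda>n. real n powr (1 - 1/p) * \<bar>X x\<bar>"])
        show "\<forall>\<^sub>F n in sequentially. real n powr (1 - 1/p) * min \<bar>X x\<bar> (real n powr (1/p))
            \<le> real n powr (1 - 1/p) * \<bar>X x\<bar>"
          by (intro always_eventually allI mult_left_mono) auto
        show "(\<lambda>n. real n powr (1 - 1/p) * \<bar>X x\<bar>) \<longlonglongrightarrow> 0"
          using tendsto_mult_left_zero[OF vanish] by simp
      qed auto
    qed
  qed measurable
  then show ?thesis by simp
qed

lemma expectation_tail_scaled_tendsto_0: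
  fixes b :: "nat \<Rightarrow> real"
  assumes p: "p \<ge> 1" and b_pos: "\<And>n. n \<ge> 1 \<Longrightarrow> 0 < b n" and b_lim: "filterlim b at_top sequentially"
    and b_large: "\<And>n. n \<ge> 1 \<Longrightarrow> real n powr (1 - 1/p) \<le> b n powr (r * p - 1)"
  shows "(\<lambda>n. expectation (\<lambda>\<omega>. real n powr (1 - 1/p) * (if b n \<le> \<bar>X \<omega>\<bar> then \<bar>X \<omega>\<bar> else 0))) \<longlonglongrightarrow> 0"
proof -
  have "1 * 1 \<le> r * p" using r_ge_1 p by (intro mult_mono) auto
  then have rp: "r * p - 1 \<ge> 0" by simp
  define s where "s = (\<lambda>n \<omega>. real n powr (1 - 1/p) * (if b n \<le> \<bar>X \<omega>\<bar> then \<bar>X \<omega>\<bar> else 0))"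
  have "(\<lambda>n. expectation (s n)) \<longlonglongrightarrow> expectation (\<lambda>\<omega>. 0)"
  proof (rule integral_dominated_convergence[where w = "\<lambda>\<omega>. \<bar>X \<omega>\<bar> powr (r * p)"])
    show "integrable M (\<lambda>\<omega>. \<bar>X \<omega>\<bar> powr (r * p))" by (rule integrable_moment)
    show "AE x in M. norm (s n x) \<le> \<bar>X x\<bar> powr (r * p)" for n
    proof (rule AE_I2)
      fix x
      show "norm (s n x) \<le> \<bar>X x\<bar> powr (r * p)"
      proof (cases "n \<ge> 1 \<and> b n \<le> \<bar>X x\<bar>")
        case True
        then have n: "n \<ge> 1" and bx: "b n \<le> \<bar>X x\<bar>" by auto
        have "norm (s n x) = real n powr (1 - 1/p) * \<bar>X x\<bar>" using bx by (simp add: s_def)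
        also have "\<dots> \<le> b n powr (r * p - 1) * \<bar>X x\<bar>"
          using b_large[OF n] by (intro mult_right_mono) auto
        also have "\<dots> \<le> \<bar>X x\<bar> powr (r * p - 1) * \<bar>X x\<bar>"
          using bx b_pos[OF n] rp by (intro mult_right_mono powr_mono2) auto
        also have "\<dots> = \<bar>X x\<bar> powr (r * p)" using bx b_pos[OF n] by (simp add: powr_diff)
        finally show ?thesis .
      next
        case False
        then have "n = 0 \<or> \<not> b n \<le> \<bar>X x\<bar>" by auto
        then show ?thesis by (auto simp: s_def)
      qed
    qed
    show "AE x in M. (\<lambda>n. s n x) \<longlonglongrightarrow> 0"
    proof (rule AE_I2)
      fix x
      have "eventually (\<lambda>n. b n > \<bar>X x\<bar>) sequentially"
        using b_lim by (simp add: filterlim_at_top_dense)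
      then have "eventually (\<lambda>n. s n x = 0) sequentially"
        by eventually_elim (auto simp: s_def)
      then show "(\<lambda>n. s n x) \<longlonglongrightarrow> 0" by (rule tendsto_eventually)
    qed
  qed (auto simp: s_def)
  then show ?thesis by (simp add: s_def)
qed

lemma truncated_means_negligible:
  fixes b :: "nat \<Rightarrow> real" and c :: real
  assumes b_pos: "\<And>n. n \<ge> 1 \<Longrightarrow> 0 < b n" and b_le: "\<And>n. n \<ge> 1 \<Longrightarrow> b n \<le> real n powr (1/p)"
    and b_lim: "filterlim b at_top sequentially"
    and b_large: "\<And>n. p \<ge> 1 \<Longrightarrow> n \<ge> 1 \<Longrightarrow> real n powr (1 - 1/p) \<le> b n powr (r * p - 1)"
    and c: "c > 0"
  shows "eventually (\<lambda>n. \<bar>\<Sum>k=1..n. expectation (trunc n (b n) k)\<bar> \<le> c * real n powr (1/p)) sequentially"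
proof -
  have split_n: "real n = real n powr (1/p) * real n powr (1 - 1/p)" if "n \<ge> 1" for n
    using that by (simp add: powr_add[symmetric])
  obtain e where e: "e \<longlonglongrightarrow> 0"
    and bound: "\<And>n. n \<ge> 1 \<Longrightarrow> \<bar>\<Sum>k=1..n. expectation (trunc n (b n) k)\<bar> \<le> K * real n powr (1/p) * e n"
  proof (cases "p < 1")
    case True
    show ?thesis
    proof (rule that[OF expectation_min_scaled_tendsto_0[OF True]])
      fix n :: nat assume n: "n \<ge> 1"
      have "\<bar>\<Sum>k=1..n. expectation (trunc n (b n) k)\<bar> \<le> real n * K * expectation (\<lambda>\<omega>. min \<bar>X \<omega>\<bar> (real n powr (1/p)))"
        by (rule abs_sum_expectation_trunc_le_min[OF n less_imp_le[OF b_pos[OF n]] b_le[OF n]])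
      also have "\<dots> = K * real n powr (1/p) * expectation (\<lambda>\<omega>. real n powr (1 - 1/p) * min \<bar>X \<omega>\<bar> (real n powr (1/p)))"
        by (subst split_n[OF n]) (simp add: mult_ac)
      finally show "\<bar>\<Sum>k=1..n. expectation (trunc n (b n) k)\<bar> \<le> \<dots>" .
    qed
  next
    case False
    then have p: "p \<ge> 1" by simp
    show ?thesis
    proof (rule that[OF expectation_tail_scaled_tendsto_0[OF p b_pos b_lim b_large[OF p]]])
      fix n :: nat assume n: "n \<ge> 1"
      have "\<bar>\<Sum>k=1..n. expectation (trunc n (b n) k)\<bar> \<le> real n * K * expectation (\<lambda>\<omega>. if b n \<le> \<bar>X \<omega>\<bar> then \<bar>X \<omega>\<bar> else 0)"
        using abs_sum_expectation_trunc_le_tail[OF n _ p] b_pos[OF n] by simp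
      also have "\<dots> = K * real n powr (1/p) * expectation (\<lambda>\<omega>. real n powr (1 - 1/p) * (if b n \<le> \<bar>X \<omega>\<bar> then \<bar>X \<omega>\<bar> else 0))"
        by (subst split_n[OF n]) (simp add: mult_ac)
      finally show "\<bar>\<Sum>k=1..n. expectation (trunc n (b n) k)\<bar> \<le> \<dots>" .
    qed auto
  qed
  have "eventually (\<lambda>n. e n < c / K) sequentially"
    using e by (rule order_tendstoD(2)) (use c K_ge_1 in simp)
  then show ?thesis
    using eventually_ge_at_top[of 1]
  proof eventually_elim
    case (elim n)
    then have n: "n \<ge> 1" and "K * e n \<le> c" using K_ge_1 by (auto simp: field_simps)
    then have "K * real n powr (1/p) * e n \<le> c * real n powr (1/p)"
      using mult_right_mono[OF \<open>K * e n \<le> c\<close> powr_ge_zero[of "real n" "1/p"]] by (simp add: mult_ac)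
    with bound[OF n] show ?case by linarith
  qed
qed

definition centered_trunc :: "nat \<Rightarrow> real \<Rightarrow> nat \<Rightarrow> 'a \<Rightarrow> real" where
  "centered_trunc n b k \<omega> = trunc n b k \<omega> - expectation (trunc n b k)"

lemma centered_trunc_measurable: "n \<ge> 1 \<Longrightarrow> k \<in> {1..n} \<Longrightarrow> centered_trunc n b k \<in> borel_measurable M"
  unfolding centered_trunc_def using trunc_measurable by measurable

lemma indep_centered_trunc:
  assumes n: "n \<ge> 1"
  shows "indep_vars (\<lambda>_. borel) (centered_trunc n b) {1..n}"
proof -
  have "indep_vars (\<lambda>_. borel) (\<lambda>k \<omega>. (\<lambda>k x. (if \<bar>x\<bar> \<le> b then x else 0) - expectation (trunc n b k)) k (Xa k n \<omega>)) {1..n}"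
    by (rule indep_vars_compose2[OF indep_row[OF n]]) measurable
  then show ?thesis by (simp add: centered_trunc_def[abs_def] trunc_def[abs_def])
qed

lemma abs_expectation_trunc_le: "n \<ge> 1 \<Longrightarrow> k \<in> {1..n} \<Longrightarrow> b \<ge> 0 \<Longrightarrow> \<bar>expectation (trunc n b k)\<bar> \<le> b"
proof -
  assume n: "n \<ge> 1" and k: "k \<in> {1..n}" and b: "b \<ge> 0"
  have "\<bar>expectation (trunc n b k)\<bar> \<le> expectation (\<lambda>\<omega>. \<bar>trunc n b k \<omega>\<bar>)" by (rule integral_abs_bound)
  also have "\<dots> \<le> expectation (\<lambda>\<omega>. b)"
    by (rule integral_mono) (use integrable_trunc[OF n k b] abs_trunc_le[OF b] in auto)
  finally show ?thesis by (simp add: prob_space)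
qed

lemma abs_centered_trunc_le: "n \<ge> 1 \<Longrightarrow> k \<in> {1..n} \<Longrightarrow> b \<ge> 0 \<Longrightarrow> \<bar>centered_trunc n b k \<omega>\<bar> \<le> 2 * b"
  using abs_expectation_trunc_le[of n k b] abs_trunc_le[of b n k \<omega>] unfolding centered_trunc_def by linarith

lemma expectation_centered_trunc: "n \<ge> 1 \<Longrightarrow> k \<in> {1..n} \<Longrightarrow> b \<ge> 0 \<Longrightarrow> expectation (centered_trunc n b k) = 0"
  unfolding centered_trunc_def using integrable_trunc by (simp add: prob_space)

lemma sum_expectation_centered_trunc_square_le: "n \<ge> 1 \<Longrightarrow> b \<ge> 0 \<Longrightarrow> (\<Sum>k=1..n. expectation (\<lambda>\<omega>. (centered_trunc n b k \<omega>)\<^sup>2)) \<le> (\<Sum>k=1..n. expectation (\<lambda>\<omega>. (trunc n b k \<omega>)\<^sup>2))"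
  unfolding centered_trunc_def by (intro sum_mono expectation_centered_square_le[OF trunc_measurable]) (auto intro: abs_trunc_le)

lemma sets_exists_large:
  assumes n: "n \<ge> 1"
  shows "{\<omega>\<in>space M. \<exists>k\<in>{1..n}. t < \<bar>Xa k n \<omega>\<bar>} \<in> sets M"
proof -
  have "{\<omega>\<in>space M. \<exists>k\<in>{1..n}. t < \<bar>Xa k n \<omega>\<bar>} = (\<Union>k\<in>{1..n}. {\<omega>\<in>space M. t < \<bar>Xa k n \<omega>\<bar>})"
    by auto
  also have "\<dots> \<in> sets M"
  proof (rule sets.finite_UN)
    fix k assume "k \<in> {1..n}"
    then show "{\<omega>\<in>space M. t < \<bar>Xa k n \<omega>\<bar>} \<in> sets M" using Xa_measurable[OF n] by measurable
  qed simp
  finally show ?thesis .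
qed

lemma prob_exists_large_le:
  assumes n: "n \<ge> 1"
  shows "prob {\<omega>\<in>space M. \<exists>k\<in>{1..n}. t < \<bar>Xa k n \<omega>\<bar>} \<le> real n * K * prob {\<omega>\<in>space M. t \<le> \<bar>X \<omega>\<bar>}"
proof -
  have ms: "{\<omega>\<in>space M. t \<le> \<bar>Xa k n \<omega>\<bar>} \<in> sets M" if "k \<in> {1..n}" for k
    using Xa_measurable[OF n that] by measurable
  have "{\<omega>\<in>space M. \<exists>k\<in>{1..n}. t < \<bar>Xa k n \<omega>\<bar>} \<subseteq> (\<Union>k\<in>{1..n}. {\<omega>\<in>space M. t \<le> \<bar>Xa k n \<omega>\<bar>})"
    by auto
  then have "prob {\<omega>\<in>space M. \<exists>k\<in>{1..n}. t < \<bar>Xa k n \<omega>\<bar>} \<le> prob (\<Union>k\<in>{1..n}. {\<omega>\<in>space M. t \<le> \<bar>Xa k n \<omega>\<bar>})"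
    by (intro finite_measure_mono sets.finite_UN) (auto intro: ms simp del: atLeastAtMost_iff)
  also have "\<dots> \<le> (\<Sum>k=1..n. prob {\<omega>\<in>space M. t \<le> \<bar>Xa k n \<omega>\<bar>})"
    by (intro finite_measure_subadditive_finite) (auto intro: ms simp del: atLeastAtMost_iff)
  also have "\<dots> \<le> real n * K * prob {\<omega>\<in>space M. t \<le> \<bar>X \<omega>\<bar>}"
    by (rule weakly_mean_dominated_sum_prob[OF dominated_row[OF n] n])
  finally show ?thesis .
qed

lemma summable_weighted_tail_prob:
  assumes c: "c > 0"
  shows "summable (\<lambda>m. real m powr (r - 1) * prob {\<omega>\<in>space M. c * real m powr (1/p) \<le> \<bar>X \<omega>\<bar>})"
proof -
  define f where "f = (\<lambda>m \<omega>. real m powr (r - 1) * indicator {\<omega>\<in>space M. c * real m powr (1/p) \<le> \<bar>X \<omega>\<bar>} \<omega>)"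
  have "summable (\<lambda>m. expectation (f m))"
  proof (rule summable_expectation_bounded[where h = "\<lambda>\<omega>. (\<bar>X \<omega>\<bar> / c) powr (r * p)"])
    show "integrable M (f m)" for m
      unfolding f_def by (intro integrable_mult_right integrable_real_indicator) (auto simp: less_top[symmetric])
    show "0 \<le> f m \<omega>" for m \<omega> by (simp add: f_def)
    show "integrable M (\<lambda>\<omega>. (\<bar>X \<omega>\<bar> / c) powr (r * p))"
      using integrable_moment c by (simp add: powr_divide)
    show "(\<Sum>m<N. f m \<omega>) \<le> (\<bar>X \<omega>\<bar> / c) powr (r * p)" if "\<omega> \<in> space M" for N \<omega>
    proof -
      have "(\<Sum>m<N. f m \<omega>) = (\<Sum>m<N. real m powr (r - 1) * (if real m \<le> (\<bar>X \<omega>\<bar> / c) powr p then 1 else 0))"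
        using that mult_powr_inverse_le_iff[OF c _ p_pos] by (intro sum.cong) (auto simp: f_def)
      also have "\<dots> \<le> ((\<bar>X \<omega>\<bar> / c) powr p) powr r"
        by (rule sum_powr_indicator_le[OF _ r_ge_1]) simp
      also have "\<dots> = (\<bar>X \<omega>\<bar> / c) powr (r * p)" by (simp add: powr_powr mult.commute)
      finally show ?thesis .
    qed
  qed
  then show ?thesis by (simp add: f_def)
qed

end

section \<open>The case r = 1\<close>

context dominated_array
begin

lemma summable_truncated_second_moment:
  shows "summable (\<lambda>m. expectation (\<lambda>\<omega>. (min \<bar>X \<omega>\<bar> (real m powr (1/p)))\<^sup>2 / real m powr (2/p)))"
proof (rule summable_expectation_bounded[where h = "\<lambda>\<omega>. 2 + \<bar>X \<omega>\<bar> powr p + \<bar>X \<omega>\<bar> powr p / (2/p - 1)"])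
  show "integrable M (\<lambda>\<omega>. (min \<bar>X \<omega>\<bar> (real m powr (1/p)))\<^sup>2 / real m powr (2/p))" for m
  proof (rule integrable_const_bound[where B="(real m powr (1/p))\<^sup>2 / real m powr (2/p)"])
    show "AE x in M. norm ((min \<bar>X x\<bar> (real m powr (1/p)))\<^sup>2 / real m powr (2/p)) \<le> (real m powr (1/p))\<^sup>2 / real m powr (2/p)"
      by (auto intro!: AE_I2 divide_right_mono power_mono)
  qed measurable
  show "0 \<le> (min \<bar>X \<omega>\<bar> (real m powr (1/p)))\<^sup>2 / real m powr (2/p)" for m \<omega> by simp
  show "integrable M (\<lambda>\<omega>. 2 + \<bar>X \<omega>\<bar> powr p + \<bar>X \<omega>\<bar> powr p / (2/p - 1))"
    using integrable_abs_X_powr[OF p_pos] r_ge_1 p_pos by simp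
  show "(\<Sum>m<N. (min \<bar>X \<omega>\<bar> (real m powr (1/p)))\<^sup>2 / real m powr (2/p)) \<le> 2 + \<bar>X \<omega>\<bar> powr p + \<bar>X \<omega>\<bar> powr p / (2/p - 1)" for N \<omega>
  proof -
    have s: "2/p > 1" using p_pos p_less_2 by (simp add: field_simps)
    have "(\<Sum>m<N. (min \<bar>X \<omega>\<bar> (real m powr (1/p)))\<^sup>2 / real m powr (2/p)) = (\<Sum>m<N. min ((\<bar>X \<omega>\<bar> powr p / real m) powr (2/p)) 1)"
    proof (rule sum.cong[OF refl])
      fix m
      show "(min \<bar>X \<omega>\<bar> (real m powr (1/p)))\<^sup>2 / real m powr (2/p) = min ((\<bar>X \<omega>\<bar> powr p / real m) powr (2/p)) 1"
      proof (cases "m = 0")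
        case True then show ?thesis by simp
      next
        case False
        have N2: "(real m powr (1/p))\<^sup>2 = real m powr (2/p)"
          using False by (simp add: powr_power)
        have Y2: "(\<bar>X \<omega>\<bar> powr p / real m) powr (2/p) = (\<bar>X \<omega>\<bar>)\<^sup>2 / real m powr (2/p)"
        proof -
          have "(\<bar>X \<omega>\<bar> powr p / real m) powr (2/p) = (\<bar>X \<omega>\<bar> powr p) powr (2/p) / real m powr (2/p)"
            by (simp add: powr_divide)
          also have "(\<bar>X \<omega>\<bar> powr p) powr (2/p) = \<bar>X \<omega>\<bar> powr 2"
            using p_pos by (simp add: powr_powr)
          also have "\<bar>X \<omega>\<bar> powr 2 = (\<bar>X \<omega>\<bar>)\<^sup>2"
            by (cases "X \<omega> = 0") (auto simp: powr_realpow)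
          finally show ?thesis .
        qed
        show ?thesis
          using min_power2_divide[of "\<bar>X \<omega>\<bar>" "real m powr (1/p)"] False by (simp add: N2 Y2)
      qed
    qed
    also have "\<dots> \<le> 2 + \<bar>X \<omega>\<bar> powr p + \<bar>X \<omega>\<bar> powr p / (2/p - 1)"
      by (rule sum_min_powr_le[OF _ s]) simp
    finally show ?thesis .
  qed
qed

lemma row_sum_large_cases_Chebyshev:
  assumes cent: "\<bar>\<Sum>k=1..n. expectation (trunc n b k)\<bar> \<le> \<epsilon> / 2 * b"
    and large: "\<epsilon> * b \<le> \<bar>\<Sum>k=1..n. Xa k n \<omega>\<bar>"
  shows "(\<exists>k\<in>{1..n}. b < \<bar>Xa k n \<omega>\<bar>) \<or> \<epsilon> / 2 * b \<le> \<bar>\<Sum>k=1..n. centered_trunc n b k \<omega>\<bar>"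
proof (cases "\<exists>k\<in>{1..n}. b < \<bar>Xa k n \<omega>\<bar>")
  case False
  then have "(\<Sum>k=1..n. Xa k n \<omega>) = (\<Sum>k=1..n. trunc n b k \<omega>)"
    by (auto simp: trunc_def not_less intro!: sum.cong)
  also have "\<dots> = (\<Sum>k=1..n. centered_trunc n b k \<omega>) + (\<Sum>k=1..n. expectation (trunc n b k))"
    by (simp add: centered_trunc_def sum.distrib[symmetric])
  finally have "\<epsilon> / 2 * b \<le> \<bar>\<Sum>k=1..n. centered_trunc n b k \<omega>\<bar>"
    using large cent abs_triangle_ineq[of "\<Sum>k=1..n. centered_trunc n b k \<omega>" "\<Sum>k=1..n. expectation (trunc n b k)"]
    by linarith
  then show ?thesis by (rule disjI2)
qed simp

lemma prob_row_sum_ge_Chebyshev: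
  assumes n: "n \<ge> 1" and e: "\<epsilon> > 0"
    and cent: "\<bar>\<Sum>k=1..n. expectation (trunc n (real n powr (1/p)) k)\<bar> \<le> \<epsilon> / 2 * real n powr (1/p)"
  shows "prob {\<omega>\<in>space M. \<epsilon> * real n powr (1/p) \<le> \<bar>\<Sum>k=1..n. Xa k n \<omega>\<bar>}
    \<le> real n * K * prob {\<omega>\<in>space M. real n powr (1/p) \<le> \<bar>X \<omega>\<bar>}
      + 4 / \<epsilon>\<^sup>2 * (real n * K * (expectation (\<lambda>\<omega>. (min \<bar>X \<omega>\<bar> (real n powr (1/p)))\<^sup>2) / real n powr (2/p)))"
proof -
  define b where "b = real n powr (1/p)"
  have b: "b > 0" using n by (simp add: b_def)
  define x where "x = \<epsilon> / 2 * b"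
  have x: "x > 0" using b e by (simp add: x_def)
  define B1 where "B1 = {\<omega>\<in>space M. \<exists>k\<in>{1..n}. b < \<bar>Xa k n \<omega>\<bar>}"
  define C where "C = {\<omega>\<in>space M. x \<le> \<bar>\<Sum>k=1..n. centered_trunc n b k \<omega>\<bar>}"
  have [measurable]: "(\<lambda>\<omega>. \<Sum>k=1..n. centered_trunc n b k \<omega>) \<in> borel_measurable M"
    by (rule borel_measurable_sum) (rule centered_trunc_measurable[OF n])
  have sets: "B1 \<in> sets M" "C \<in> sets M"
    unfolding B1_def C_def by (rule sets_exists_large[OF n], measurable)
  have "{\<omega>\<in>space M. \<epsilon> * b \<le> \<bar>\<Sum>k=1..n. Xa k n \<omega>\<bar>} \<subseteq> B1 \<union> C"
    using row_sum_large_cases_Chebyshev[OF cent[folded b_def]] by (auto simp: B1_def C_def x_def)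
  then have "prob {\<omega>\<in>space M. \<epsilon> * b \<le> \<bar>\<Sum>k=1..n. Xa k n \<omega>\<bar>} \<le> prob (B1 \<union> C)"
    using sets by (intro finite_measure_mono) auto
  also have "\<dots> \<le> prob B1 + prob C"
    using sets by (rule measure_Un_le)
  also have "prob B1 \<le> real n * K * prob {\<omega>\<in>space M. b \<le> \<bar>X \<omega>\<bar>}"
    unfolding B1_def by (rule prob_exists_large_le[OF n])
  also have "prob C \<le> (\<Sum>k=1..n. expectation (\<lambda>\<omega>. (centered_trunc n b k \<omega>)\<^sup>2)) / x\<^sup>2"
    unfolding C_def
    by (rule prob_abs_sum_ge_indep_Chebyshev[OF _ indep_centered_trunc[OF n], where B="2 * b"])
      (use b x abs_centered_trunc_le[OF n] expectation_centered_trunc[OF n] in auto)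
  also have "\<dots> \<le> (real n * K * expectation (\<lambda>\<omega>. (min \<bar>X \<omega>\<bar> b)\<^sup>2)) / x\<^sup>2"
    using sum_expectation_centered_trunc_square_le[OF n, of b] sum_expectation_trunc_square_le_min[OF n, of b] b
    by (intro divide_right_mono) auto
  also have "\<dots> = 4 / \<epsilon>\<^sup>2 * (real n * K * (expectation (\<lambda>\<omega>. (min \<bar>X \<omega>\<bar> b)\<^sup>2) / real n powr (2/p)))"
  proof -
    have x_sq: "x\<^sup>2 = \<epsilon>\<^sup>2 / 4 * real n powr (2/p)"
      using n by (simp add: x_def b_def power_mult_distrib power_divide powr_power)
    show ?thesis using e n unfolding x_sq by (simp add: field_simps)
  qed
  finally show ?thesis by (simp add: b_def)
qed

lemma summable_row_tail_r_eq_1: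
  assumes r1: "r = 1" and e: "\<epsilon> > 0"
  shows "summable (\<lambda>n. real n powr (r - 2) * prob {\<omega>\<in>space M. \<epsilon> * real n powr (1/p) \<le> \<bar>\<Sum>k=1..n. Xa k n \<omega>\<bar>})"
proof -
  have cent: "eventually (\<lambda>n. \<bar>\<Sum>k=1..n. expectation (trunc n (real n powr (1/p)) k)\<bar> \<le> \<epsilon> / 2 * real n powr (1/p)) sequentially"
  proof (rule truncated_means_negligible[where b="\<lambda>n. real n powr (1/p)"])
    show "filterlim (\<lambda>n. real n powr (1/p)) at_top sequentially"
      using p_pos by real_asymp
    show "real n powr (1 - 1/p) \<le> (real n powr (1/p)) powr (r * p - 1)" if "p \<ge> 1" "n \<ge> 1" for n
      using r1 p_pos by (simp add: powr_powr field_simps)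
  qed (use e in auto)
  define G where "G = (\<lambda>n. K * (real n powr (r - 1) * prob {\<omega>\<in>space M. 1 * real n powr (1/p) \<le> \<bar>X \<omega>\<bar>})
      + 4 / \<epsilon>\<^sup>2 * K * expectation (\<lambda>\<omega>. (min \<bar>X \<omega>\<bar> (real n powr (1/p)))\<^sup>2 / real n powr (2/p)))"
  have sG: "summable G"
    unfolding G_def
    by (intro summable_add summable_mult summable_weighted_tail_prob summable_truncated_second_moment) simp
  have "eventually (\<lambda>n. norm (real n powr (r - 2) * prob {\<omega>\<in>space M. \<epsilon> * real n powr (1/p) \<le> \<bar>\<Sum>k=1..n. Xa k n \<omega>\<bar>}) \<le> G n) sequentially"
    using cent eventually_ge_at_top[of 1]
  proof eventually_elim
    case (elim n)
    then have n: "n \<ge> 1" and c: "\<bar>\<Sum>k=1..n. expectation (trunc n (real n powr (1/p)) k)\<bar> \<le> \<epsilon> / 2 * real n powr (1/p)" by auto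
    have np: "real n > 0" using n by simp
    have e1: "real n powr (r - 2) = 1 / real n" using r1 np by (simp add: powr_minus_divide)
    have e2: "real n powr (r - 1) = 1" using r1 np by simp
    have eE: "expectation (\<lambda>\<omega>. (min \<bar>X \<omega>\<bar> (real n powr (1/p)))\<^sup>2 / real n powr (2/p)) = expectation (\<lambda>\<omega>. (min \<bar>X \<omega>\<bar> (real n powr (1/p)))\<^sup>2) / real n powr (2/p)"
      by simp
    have "norm (real n powr (r - 2) * prob {\<omega>\<in>space M. \<epsilon> * real n powr (1/p) \<le> \<bar>\<Sum>k=1..n. Xa k n \<omega>\<bar>})
        = 1 / real n * prob {\<omega>\<in>space M. \<epsilon> * real n powr (1/p) \<le> \<bar>\<Sum>k=1..n. Xa k n \<omega>\<bar>}"
      by (simp add: e1)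
    also have "\<dots> \<le> 1 / real n * (real n * K * prob {\<omega>\<in>space M. real n powr (1/p) \<le> \<bar>X \<omega>\<bar>}
      + 4 / \<epsilon>\<^sup>2 * (real n * K * (expectation (\<lambda>\<omega>. (min \<bar>X \<omega>\<bar> (real n powr (1/p)))\<^sup>2) / real n powr (2/p))))"
      by (intro mult_left_mono prob_row_sum_ge_Chebyshev[OF n e c]) simp
    also have "\<dots> = G n"
      using np by (simp add: G_def e2 eE field_simps)
    finally show ?case .
  qed
  then show ?thesis using sG by (rule summable_comparison_test_ev)
qed

end

section \<open>The case r > 1\<close>

context dominated_array
begin

lemma prob_abs_X_ge_le:
  assumes b: "b > 0"
  shows "prob {\<omega>\<in>space M. b \<le> \<bar>X \<omega>\<bar>} \<le> expectation (\<lambda>\<omega>. \<bar>X \<omega>\<bar> powr (r * p)) / b powr (r * p)"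
proof -
  have q: "r * p > 0" using r_ge_1 p_pos by simp
  have "{\<omega>\<in>space M. b \<le> \<bar>X \<omega>\<bar>} \<subseteq> {\<omega>\<in>space M. \<bar>X \<omega>\<bar> powr (r * p) \<ge> b powr (r * p)}"
    using b q by (auto intro: powr_mono2)
  then have "prob {\<omega>\<in>space M. b \<le> \<bar>X \<omega>\<bar>} \<le> prob {\<omega>\<in>space M. \<bar>X \<omega>\<bar> powr (r * p) \<ge> b powr (r * p)}"
    by (intro finite_measure_mono) measurable
  also have "\<dots> \<le> expectation (\<lambda>\<omega>. \<bar>X \<omega>\<bar> powr (r * p)) / b powr (r * p)"
    by (rule integral_Markov_inequality_measure[OF integrable_moment]) (use b in auto)
  finally show ?thesis .
qed

lemma prob_many_large_le:
  assumes n: "n \<ge> 1" and b: "b \<ge> 0" and s: "s > 0"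
  shows "prob {\<omega>\<in>space M. a \<le> (\<Sum>k\<in>{1..n}. (if b < \<bar>Xa k n \<omega>\<bar> then 1 else 0))}
     \<le> exp (- s * a + (exp s - 1) * (real n * K * prob {\<omega>\<in>space M. b \<le> \<bar>X \<omega>\<bar>}))"
proof -
  define W where "W = (\<lambda>k \<omega>. if b < \<bar>Xa k n \<omega>\<bar> then 1 else (0::real))"
  have ind: "indep_vars (\<lambda>_. borel) W {1..n}"
  proof -
    have "indep_vars (\<lambda>_. borel) (\<lambda>k \<omega>. (\<lambda>k x. if b < \<bar>x\<bar> then 1 else (0::real)) k (Xa k n \<omega>)) {1..n}"
      by (rule indep_vars_compose2[OF indep_row[OF n]]) measurable
    then show ?thesis by (simp add: W_def)
  qed
  define Ak where "Ak = (\<lambda>k. {\<omega>\<in>space M. b < \<bar>Xa k n \<omega>\<bar>})"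
  have Aks: "Ak k \<in> sets M" if "k \<in> {1..n}" for k
    unfolding Ak_def using Xa_measurable[OF n that] by measurable
  have "prob {\<omega>\<in>space M. a \<le> (\<Sum>k\<in>{1..n}. W k \<omega>)} \<le> exp (- s * a + (\<Sum>k\<in>{1..n}. (exp s - 1) * prob (Ak k)))"
  proof (rule prob_sum_ge_indep_Chernoff[OF _ ind s])
    fix k assume k: "k \<in> {1..n}"
    have "(\<integral>\<^sup>+\<omega>. ennreal (exp (s * W k \<omega>)) \<partial>M) = (\<integral>\<^sup>+\<omega>. ennreal (exp (s * indicator (Ak k) \<omega>)) \<partial>M)"
      by (rule nn_integral_cong) (auto simp: W_def Ak_def indicator_def)
    also have "\<dots> \<le> ennreal (exp ((exp s - 1) * prob (Ak k)))"
      by (rule nn_integral_exp_indicator_le[OF Aks[OF k] s])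
    finally show "(\<integral>\<^sup>+\<omega>. ennreal (exp (s * W k \<omega>)) \<partial>M) \<le> ennreal (exp ((exp s - 1) * prob (Ak k)))" .
  qed simp
  also have "\<dots> \<le> exp (- s * a + (exp s - 1) * (real n * K * prob {\<omega>\<in>space M. b \<le> \<bar>X \<omega>\<bar>}))"
  proof -
    have "(\<Sum>k\<in>{1..n}. prob (Ak k)) \<le> (\<Sum>k\<in>{1..n}. prob {\<omega>\<in>space M. b \<le> \<bar>Xa k n \<omega>\<bar>})"
    proof (rule sum_mono)
      fix k assume k: "k \<in> {1..n}"
      show "prob (Ak k) \<le> prob {\<omega>\<in>space M. b \<le> \<bar>Xa k n \<omega>\<bar>}"
        unfolding Ak_def using Xa_measurable[OF n k] by (intro finite_measure_mono) (auto, measurable)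
    qed
    also have "\<dots> \<le> real n * K * prob {\<omega>\<in>space M. b \<le> \<bar>X \<omega>\<bar>}"
      by (rule weakly_mean_dominated_sum_prob[OF dominated_row[OF n] n])
    finally have "(\<Sum>k\<in>{1..n}. (exp s - 1) * prob (Ak k)) \<le> (exp s - 1) * (real n * K * prob {\<omega>\<in>space M. b \<le> \<bar>X \<omega>\<bar>})"
      using s by (simp add: sum_distrib_left[symmetric] mult_left_mono)
    then show ?thesis by simp
  qed
  finally show ?thesis by (simp add: W_def)
qed

lemma prob_sum_centered_trunc_ge_le:
  assumes n: "n \<ge> 1" and b: "b > 0"
  shows "prob {\<omega>\<in>space M. x \<le> (\<Sum>k=1..n. centered_trunc n b k \<omega>)}
      \<le> exp (- (1 / (2 * b)) * x + (1 / (2 * b))\<^sup>2 * (\<Sum>k=1..n. expectation (\<lambda>\<omega>. (trunc n b k \<omega>)\<^sup>2)))"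
    and "prob {\<omega>\<in>space M. x \<le> (\<Sum>k=1..n. - centered_trunc n b k \<omega>)}
      \<le> exp (- (1 / (2 * b)) * x + (1 / (2 * b))\<^sup>2 * (\<Sum>k=1..n. expectation (\<lambda>\<omega>. (trunc n b k \<omega>)\<^sup>2)))"
proof -
  have bound: "\<bar>trunc n b k \<omega>\<bar> \<le> b" "\<bar>- trunc n b k \<omega>\<bar> \<le> b" for k \<omega>
    using abs_trunc_le[of b n k \<omega>] b by auto
  have ind: "indep_vars (\<lambda>_. borel) (trunc n b) {1..n}"
    using indep_vars_compose2[OF indep_row[OF n], of "\<lambda>k x. if \<bar>x\<bar> \<le> b then x else 0"]
    by (simp add: trunc_def[abs_def])
  have "indep_vars (\<lambda>_. borel) (\<lambda>k \<omega>. (\<lambda>k x. - x) k (trunc n b k \<omega>)) {1..n}"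
    by (rule indep_vars_compose2[OF ind]) measurable
  then have ind_uminus: "indep_vars (\<lambda>_. borel) (\<lambda>k \<omega>. - trunc n b k \<omega>) {1..n}" by simp
  show "prob {\<omega>\<in>space M. x \<le> (\<Sum>k=1..n. centered_trunc n b k \<omega>)}
      \<le> exp (- (1 / (2 * b)) * x + (1 / (2 * b))\<^sup>2 * (\<Sum>k=1..n. expectation (\<lambda>\<omega>. (trunc n b k \<omega>)\<^sup>2)))"
    using prob_sum_centered_ge_indep_Bernstein[OF _ ind bound(1) b] by (simp add: centered_trunc_def)
  show "prob {\<omega>\<in>space M. x \<le> (\<Sum>k=1..n. - centered_trunc n b k \<omega>)}
      \<le> exp (- (1 / (2 * b)) * x + (1 / (2 * b))\<^sup>2 * (\<Sum>k=1..n. expectation (\<lambda>\<omega>. (trunc n b k \<omega>)\<^sup>2)))"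
    using prob_sum_centered_ge_indep_Bernstein[OF _ ind_uminus bound(2) b] by (simp add: centered_trunc_def)
qed

lemma row_sum_large_cases_exponential:
  fixes N :: nat
  assumes N: "N \<ge> 1" and e: "\<epsilon> > 0" and t: "t > 0"
    and cent: "\<bar>\<Sum>k=1..n. expectation (trunc n b k)\<bar> \<le> \<epsilon> / 4 * t"
    and large: "\<epsilon> * t \<le> \<bar>\<Sum>k=1..n. Xa k n \<omega>\<bar>"
  shows "(\<exists>k\<in>{1..n}. \<epsilon> / (4 * real N) * t < \<bar>Xa k n \<omega>\<bar>)
    \<or> real N \<le> (\<Sum>k=1..n. if b < \<bar>Xa k n \<omega>\<bar> then 1 else 0)
    \<or> \<epsilon> / 2 * t \<le> (\<Sum>k=1..n. centered_trunc n b k \<omega>)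
    \<or> \<epsilon> / 2 * t \<le> (\<Sum>k=1..n. - centered_trunc n b k \<omega>)"
proof (rule ccontr)
  define \<delta> where "\<delta> = \<epsilon> / (4 * real N)"
  define W where "W k = (if b < \<bar>Xa k n \<omega>\<bar> then 1 else (0::real))" for k
  assume "\<not> ?thesis"
  then have small: "\<And>k. k \<in> {1..n} \<Longrightarrow> \<bar>Xa k n \<omega>\<bar> \<le> \<delta> * t" and few: "(\<Sum>k=1..n. W k) < real N"
    and centered: "\<bar>\<Sum>k=1..n. centered_trunc n b k \<omega>\<bar> < \<epsilon> / 2 * t"
    by (auto simp: \<delta>_def W_def not_le not_less sum_negf abs_less_iff)
  have pointwise: "\<bar>Xa k n \<omega> - trunc n b k \<omega>\<bar> \<le> \<delta> * t * W k" if "k \<in> {1..n}" for k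
    using small[OF that] by (auto simp: trunc_def W_def)
  have "\<bar>\<Sum>k=1..n. Xa k n \<omega> - trunc n b k \<omega>\<bar> \<le> (\<Sum>k=1..n. \<bar>Xa k n \<omega> - trunc n b k \<omega>\<bar>)"
    by (rule sum_abs)
  also have "\<dots> \<le> (\<Sum>k=1..n. \<delta> * t * W k)"
    using pointwise by (rule sum_mono)
  also have "\<dots> = \<delta> * t * (\<Sum>k=1..n. W k)"
    by (simp add: sum_distrib_left)
  also have "\<dots> \<le> \<delta> * t * real N"
    using few N t e by (intro mult_left_mono) (auto simp: \<delta>_def)
  also have "\<dots> = \<epsilon> / 4 * t" using N by (simp add: \<delta>_def)
  finally have excess: "\<bar>\<Sum>k=1..n. Xa k n \<omega> - trunc n b k \<omega>\<bar> \<le> \<epsilon> / 4 * t" .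
  have "(\<Sum>k=1..n. Xa k n \<omega>) = (\<Sum>k=1..n. centered_trunc n b k \<omega>) + (\<Sum>k=1..n. expectation (trunc n b k))
      + (\<Sum>k=1..n. Xa k n \<omega> - trunc n b k \<omega>)"
    by (simp add: centered_trunc_def sum.distrib[symmetric] sum_subtractf[symmetric])
  then show False using large excess cent centered by linarith
qed

lemma prob_row_sum_ge_exponential:
  fixes N :: nat
  assumes n: "n \<ge> 1" and b: "b \<ge> 1" and N: "N \<ge> 1" and e: "\<epsilon> > 0" and s: "s > 0"
    and cent: "\<bar>\<Sum>k=1..n. expectation (trunc n b k)\<bar> \<le> \<epsilon> / 4 * real n powr (1/p)"
  shows "prob {\<omega>\<in>space M. \<epsilon> * real n powr (1/p) \<le> \<bar>\<Sum>k=1..n. Xa k n \<omega>\<bar>}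
    \<le> real n * K * prob {\<omega>\<in>space M. \<epsilon> / (4 * real N) * real n powr (1/p) \<le> \<bar>X \<omega>\<bar>}
      + exp (- s * real N + (exp s - 1) * (real n * K * prob {\<omega>\<in>space M. b \<le> \<bar>X \<omega>\<bar>}))
      + 2 * exp (- (1 / (2 * b)) * (\<epsilon> / 2 * real n powr (1/p))
          + (1 / (2 * b))\<^sup>2 * (real n * K * (b powr (2 - min (r * p) 2) * (1 + expectation (\<lambda>\<omega>. \<bar>X \<omega>\<bar> powr (r * p))))))"
proof -
  define t where "t = real n powr (1/p)"
  have t: "t > 0" using n by (simp add: t_def)
  define B1 where "B1 = {\<omega>\<in>space M. \<exists>k\<in>{1..n}. \<epsilon> / (4 * real N) * t < \<bar>Xa k n \<omega>\<bar>}"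
  define B2 where "B2 = {\<omega>\<in>space M. real N \<le> (\<Sum>k=1..n. if b < \<bar>Xa k n \<omega>\<bar> then 1 else 0)}"
  define B3 where "B3 = {\<omega>\<in>space M. \<epsilon> / 2 * t \<le> (\<Sum>k=1..n. centered_trunc n b k \<omega>)}"
  define B4 where "B4 = {\<omega>\<in>space M. \<epsilon> / 2 * t \<le> (\<Sum>k=1..n. - centered_trunc n b k \<omega>)}"
  have [measurable]: "(\<lambda>\<omega>. \<Sum>k=1..n. if b < \<bar>Xa k n \<omega>\<bar> then 1 else 0 :: real) \<in> borel_measurable M"
    by (rule borel_measurable_sum) (use Xa_measurable[OF n] in measurable)
  have [measurable]: "(\<lambda>\<omega>. \<Sum>k=1..n. centered_trunc n b k \<omega>) \<in> borel_measurable M"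
    "(\<lambda>\<omega>. \<Sum>k=1..n. - centered_trunc n b k \<omega>) \<in> borel_measurable M"
    by (rule borel_measurable_sum, use centered_trunc_measurable[OF n] in measurable)+
  have sets: "B1 \<in> sets M" "B2 \<in> sets M" "B3 \<in> sets M" "B4 \<in> sets M"
    unfolding B1_def B2_def B3_def B4_def by (rule sets_exists_large[OF n], measurable)
  have "{\<omega>\<in>space M. \<epsilon> * t \<le> \<bar>\<Sum>k=1..n. Xa k n \<omega>\<bar>} \<subseteq> B1 \<union> B2 \<union> (B3 \<union> B4)"
    using row_sum_large_cases_exponential[OF N e t cent[folded t_def]] by (auto simp: B1_def B2_def B3_def B4_def)
  then have "prob {\<omega>\<in>space M. \<epsilon> * t \<le> \<bar>\<Sum>k=1..n. Xa k n \<omega>\<bar>} \<le> prob (B1 \<union> B2 \<union> (B3 \<union> B4))"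
    using sets by (intro finite_measure_mono) auto
  also have "\<dots> \<le> prob (B1 \<union> B2) + prob (B3 \<union> B4)"
    using sets by (intro measure_Un_le) auto
  also have "\<dots> \<le> (prob B1 + prob B2) + (prob B3 + prob B4)"
    using sets by (intro add_mono measure_Un_le)
  also have "prob B1 \<le> real n * K * prob {\<omega>\<in>space M. \<epsilon> / (4 * real N) * t \<le> \<bar>X \<omega>\<bar>}"
    unfolding B1_def by (rule prob_exists_large_le[OF n])
  also have "prob B2 \<le> exp (- s * real N + (exp s - 1) * (real n * K * prob {\<omega>\<in>space M. b \<le> \<bar>X \<omega>\<bar>}))"
    unfolding B2_def by (rule prob_many_large_le[OF n _ s]) (use b in simp)
  also have "prob B3 + prob B4 \<le> 2 * exp (- (1 / (2 * b)) * (\<epsilon> / 2 * t)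
      + (1 / (2 * b))\<^sup>2 * (\<Sum>k=1..n. expectation (\<lambda>\<omega>. (trunc n b k \<omega>)\<^sup>2)))"
    using prob_sum_centered_trunc_ge_le[OF n, of b "\<epsilon> / 2 * t"] b by (simp add: B3_def B4_def)
  also have "\<dots> \<le> 2 * exp (- (1 / (2 * b)) * (\<epsilon> / 2 * t)
      + (1 / (2 * b))\<^sup>2 * (real n * K * (b powr (2 - min (r * p) 2) * (1 + expectation (\<lambda>\<omega>. \<bar>X \<omega>\<bar> powr (r * p))))))"
    using sum_expectation_trunc_square_le[OF n b] by (intro mult_left_mono iffD2[OF exp_le_cancel_iff] add_left_mono) auto
  finally show ?thesis by (simp add: t_def)
qed

(* The Chernoff parameter s = eta ln n turns exp(-s N) into n^(-eta N), which beats
   n^(r-2) as soon as eta N >= r. *)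
lemma exp_count_term_le:
  fixes N :: nat
  assumes n: "n \<ge> 2" and \<gamma>: "\<gamma> > 0" and \<eta>: "\<eta> = \<gamma> * (r * p) - 1" "\<eta> > 0" and NR: "r \<le> \<eta> * real N"
  shows "real n powr (r - 2) * exp (- (\<eta> * ln (real n)) * real N
      + (exp (\<eta> * ln (real n)) - 1) * (real n * K * prob {\<omega>\<in>space M. real n powr \<gamma> \<le> \<bar>X \<omega>\<bar>}))
    \<le> exp (K * expectation (\<lambda>\<omega>. \<bar>X \<omega>\<bar> powr (r * p))) * real n powr (-2)"
proof -
  define EXq where "EXq = expectation (\<lambda>\<omega>. \<bar>X \<omega>\<bar> powr (r * p))"
  have np: "real n > 1" using n by simp
  have es: "exp (\<eta> * ln (real n)) = real n powr \<eta>" using np by (simp add: powr_def mult.commute)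
  have tail: "prob {\<omega>\<in>space M. real n powr \<gamma> \<le> \<bar>X \<omega>\<bar>} \<le> EXq / real n powr (\<eta> + 1)"
    using prob_abs_X_ge_le[of "real n powr \<gamma>"] np \<eta> by (simp add: EXq_def powr_powr mult.commute)
  have "(exp (\<eta> * ln (real n)) - 1) * (real n * K * prob {\<omega>\<in>space M. real n powr \<gamma> \<le> \<bar>X \<omega>\<bar>})
      \<le> real n powr \<eta> * (real n * K * (EXq / real n powr (\<eta> + 1)))"
    using tail np K_ge_1 \<eta>(2) by (intro mult_mono mult_left_mono) (auto simp: es)
  also have "\<dots> = K * EXq"
    using np by (simp add: powr_add field_simps)
  finally have "exp (- (\<eta> * ln (real n)) * real N + (exp (\<eta> * ln (real n)) - 1) * (real n * K * prob {\<omega>\<in>space M. real n powr \<gamma> \<le> \<bar>X \<omega>\<bar>}))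
      \<le> real n powr (- (\<eta> * real N)) * exp (K * EXq)"
    using np by (simp add: powr_def algebra_simps flip: exp_add)
  then have "real n powr (r - 2) * exp (- (\<eta> * ln (real n)) * real N + (exp (\<eta> * ln (real n)) - 1) * (real n * K * prob {\<omega>\<in>space M. real n powr \<gamma> \<le> \<bar>X \<omega>\<bar>}))
      \<le> real n powr (r - 2) * (real n powr (- (\<eta> * real N)) * exp (K * EXq))"
    by (intro mult_left_mono) auto
  also have "\<dots> = real n powr (r - 2 - \<eta> * real N) * exp (K * EXq)"
    by (simp add: powr_add[symmetric])
  also have "\<dots> \<le> real n powr (-2) * exp (K * EXq)"
    using NR np by (intro mult_right_mono powr_mono) auto
  finally show ?thesis by (simp add: EXq_def mult.commute)
qed

lemma row_tail_le_r_gt_1: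
  fixes N :: nat
  assumes n: "n \<ge> 2" and N: "N \<ge> 1" and e: "\<epsilon> > 0" and \<gamma>: "\<gamma> > 0"
    and \<eta>: "\<eta> = \<gamma> * (r * p) - 1" "\<eta> > 0" and NR: "r \<le> \<eta> * real N"
    and cent: "\<bar>\<Sum>k=1..n. expectation (trunc n (real n powr \<gamma>) k)\<bar> \<le> \<epsilon> / 4 * real n powr (1/p)"
  shows "real n powr (r - 2) * prob {\<omega>\<in>space M. \<epsilon> * real n powr (1/p) \<le> \<bar>\<Sum>k=1..n. Xa k n \<omega>\<bar>}
    \<le> K * (real n powr (r - 1) * prob {\<omega>\<in>space M. \<epsilon> / (4 * real N) * real n powr (1/p) \<le> \<bar>X \<omega>\<bar>})
      + exp (K * expectation (\<lambda>\<omega>. \<bar>X \<omega>\<bar> powr (r * p))) * real n powr (-2)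
      + 2 * (real n powr (r - 2) * exp (- (\<epsilon> / 4) * real n powr (1/p - \<gamma>)
          + K * (1 + expectation (\<lambda>\<omega>. \<bar>X \<omega>\<bar> powr (r * p))) / 4 * real n powr (1 - \<gamma> * min (r * p) 2)))"
proof -
  have np: "real n > 1" and n1: "n \<ge> 1" using n by auto
  have b: "real n powr \<gamma> \<ge> 1" using np \<gamma> by (simp add: ge_one_powr_ge_zero)
  have s: "\<eta> * ln (real n) > 0" using \<eta> np by simp
  have r_split: "real n powr (r - 1) = real n powr (r - 2) * real n"
  proof -
    have "real n powr (r - 1) = real n powr ((r - 2) + 1)" by simp
    also have "\<dots> = real n powr (r - 2) * real n" using np by (simp only: powr_add) simp
    finally show ?thesis .
  qed
  define P where "P = prob {\<omega>\<in>space M. \<epsilon> * real n powr (1/p) \<le> \<bar>\<Sum>k=1..n. Xa k n \<omega>\<bar>}"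
  define P1 where "P1 = prob {\<omega>\<in>space M. \<epsilon> / (4 * real N) * real n powr (1/p) \<le> \<bar>X \<omega>\<bar>}"
  define E2 where "E2 = - (\<eta> * ln (real n)) * real N
    + (exp (\<eta> * ln (real n)) - 1) * (real n * K * prob {\<omega>\<in>space M. real n powr \<gamma> \<le> \<bar>X \<omega>\<bar>})"
  define E3 where "E3 = - (\<epsilon> / 4) * real n powr (1/p - \<gamma>)
    + K * (1 + expectation (\<lambda>\<omega>. \<bar>X \<omega>\<bar> powr (r * p))) / 4 * real n powr (1 - \<gamma> * min (r * p) 2)"
  have row: "P \<le> real n * K * P1 + exp E2 + 2 * exp E3"
    using prob_row_sum_ge_exponential[OF n1 b N e s cent]
    unfolding Bernstein_exponent_eq[OF n1] P_def P1_def E2_def E3_def .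
  have count: "real n powr (r - 2) * exp E2 \<le> exp (K * expectation (\<lambda>\<omega>. \<bar>X \<omega>\<bar> powr (r * p))) * real n powr (-2)"
    unfolding E2_def by (rule exp_count_term_le[OF n \<gamma> \<eta> NR])
  have "real n powr (r - 2) * P \<le> real n powr (r - 2) * (real n * K * P1 + exp E2 + 2 * exp E3)"
    using row by (intro mult_left_mono) auto
  also have "\<dots> = K * (real n powr (r - 1) * P1) + real n powr (r - 2) * exp E2 + 2 * (real n powr (r - 2) * exp E3)"
    by (simp add: r_split algebra_simps)
  finally show ?thesis
    using count unfolding P_def P1_def E3_def by linarith
qed

lemma summable_row_tail_r_gt_1:
  assumes r: "r > 1" and e: "\<epsilon> > 0"
  shows "summable (\<lambda>n. real n powr (r - 2) * prob {\<omega>\<in>space M. \<epsilon> * real n powr (1/p) \<le> \<bar>\<Sum>k=1..n. Xa k n \<omega>\<bar>})"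
proof -
  obtain \<gamma> where \<gamma>: "0 < \<gamma>" "\<gamma> < 1/p" "1 < \<gamma> * (r * p)"
    and \<gamma>_Bernstein: "1 - \<gamma> * min (r * p) 2 < 1/p - \<gamma>" and \<gamma>_centering: "1 - 1/p \<le> \<gamma> * (r * p - 1)"
    using exists_truncation_exponent[OF r p_pos p_less_2] by blast
  define \<eta> where "\<eta> = \<gamma> * (r * p) - 1"
  have \<eta>: "\<eta> > 0" using \<gamma> by (simp add: \<eta>_def)
  define N :: nat where "N = nat \<lceil>r / \<eta>\<rceil> + 1"
  have N: "N \<ge> 1" by (simp add: N_def)
  have NR: "r \<le> \<eta> * real N"
  proof -
    have "r / \<eta> \<le> real N" unfolding N_def by linarith
    then show ?thesis using \<eta> by (simp add: field_simps)
  qed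
  have cent: "eventually (\<lambda>n. \<bar>\<Sum>k=1..n. expectation (trunc n (real n powr \<gamma>) k)\<bar> \<le> \<epsilon> / 4 * real n powr (1/p)) sequentially"
  proof (rule truncated_means_negligible)
    show "filterlim (\<lambda>n. real n powr \<gamma>) at_top sequentially" using \<gamma> by real_asymp
    show "real n powr \<gamma> \<le> real n powr (1/p)" if "n \<ge> 1" for n
      using that \<gamma> by (intro powr_mono) auto
    show "real n powr (1 - 1/p) \<le> (real n powr \<gamma>) powr (r * p - 1)" if "n \<ge> 1" for n
      using that \<gamma>_centering by (simp add: powr_powr) (intro powr_mono, auto)
  qed (use e \<gamma> in auto)
  have exp_small: "eventually (\<lambda>n. real n powr (r - 2) * exp (- (\<epsilon> / 4) * real n powr (1/p - \<gamma>)
      + K * (1 + expectation (\<lambda>\<omega>. \<bar>X \<omega>\<bar> powr (r * p))) / 4 * real n powr (1 - \<gamma> * min (r * p) 2))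
      \<le> real n powr (-2)) sequentially"
    by (rule eventually_powr_mult_exp_le) (use \<gamma> \<gamma>_Bernstein e in auto)
  define G where "G n = K * (real n powr (r - 1) * prob {\<omega>\<in>space M. \<epsilon> / (4 * real N) * real n powr (1/p) \<le> \<bar>X \<omega>\<bar>})
      + (exp (K * expectation (\<lambda>\<omega>. \<bar>X \<omega>\<bar> powr (r * p))) + 2) * real n powr (-2)" for n
  have "summable G"
    unfolding G_def using e N
    by (intro summable_add summable_mult summable_mult2 summable_weighted_tail_prob) (auto simp: summable_real_powr_iff)
  moreover have "eventually (\<lambda>n. norm (real n powr (r - 2) * prob {\<omega>\<in>space M. \<epsilon> * real n powr (1/p) \<le> \<bar>\<Sum>k=1..n. Xa k n \<omega>\<bar>}) \<le> G n) sequentially"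
    using cent exp_small eventually_ge_at_top[of 2]
  proof eventually_elim
    case (elim n)
    then have "real n powr (r - 2) * prob {\<omega>\<in>space M. \<epsilon> * real n powr (1/p) \<le> \<bar>\<Sum>k=1..n. Xa k n \<omega>\<bar>} \<le> G n"
      using row_tail_le_r_gt_1[OF _ N e \<gamma>(1) \<eta>_def \<eta> NR, of n] unfolding G_def distrib_right by linarith
    then show ?case by simp
  qed
  ultimately show ?thesis by (rule summable_comparison_test_ev[rotated])
qed

end

theorem corollary3:
  fixes M :: "'a measure" and X :: "'a \<Rightarrow> real" and Xa :: "nat \<Rightarrow> nat \<Rightarrow> 'a \<Rightarrow> real"
    and K r p :: real
  assumes "prob_space M"
    and "X \<in> borel_measurable M"
    and "\<And>n. n \<ge> 1 \<Longrightarrow> prob_space.indep_vars M (\<lambda>_. borel) (\<lambda>k. Xa k n) {1..n}"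
    and "\<And>n. n \<ge> 1 \<Longrightarrow> weakly_mean_dominated M K (\<lambda>k. Xa k n) n X"
    and "r \<ge> 1" and "0 < p" and "p < 2"
    and "integrable M (\<lambda>\<omega>. \<bar>X \<omega>\<bar> powr (r * p))"
    and "p \<ge> 1 \<Longrightarrow> (\<forall>n\<ge>1. (\<integral>\<omega>. (\<Sum>k=1..n. Xa k n \<omega>) \<partial>M) = 0)"
  shows "\<forall>\<epsilon>>0. summable (\<lambda>n. real (Suc n) powr (r - 2) *
           measure M {\<omega> \<in> space M. \<bar>\<Sum>k=1..Suc n. Xa k (Suc n) \<omega>\<bar> \<ge> \<epsilon> * real (Suc n) powr (1 / p)})"
proof (intro allI impI)
  interpret dominated_array M X Xa K r p
    by (rule dominated_array.intro[OF assms(1)], unfold_locales) (use assms in auto)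
  fix \<epsilon> :: real assume "\<epsilon> > 0"
  have "summable (\<lambda>n. real n powr (r - 2) * prob {\<omega>\<in>space M. \<epsilon> * real n powr (1/p) \<le> \<bar>\<Sum>k=1..n. Xa k n \<omega>\<bar>})"
  proof (cases "r = 1")
    case True
    then show ?thesis using \<open>\<epsilon> > 0\<close> by (rule summable_row_tail_r_eq_1)
  next
    case False
    then show ?thesis using r_ge_1 \<open>\<epsilon> > 0\<close> by (intro summable_row_tail_r_gt_1) auto
  qed
  then show "summable (\<lambda>n. real (Suc n) powr (r - 2) *
      measure M {\<omega> \<in> space M. \<bar>\<Sum>k=1..Suc n. Xa k (Suc n) \<omega>\<bar> \<ge> \<epsilon> * real (Suc n) powr (1 / p)})"
    by (subst summable_Suc_iff)
qed

end
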